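(* Let $\mathcal{X}$ be a finite alphabet and $\mathcal{W}=\{W_x\}_{x\in\mathcal{X}}$ a classical-quantum channel. Let $n,M$ be integers and $r\in(C_0(\mathcal{W}),C(\mathcal{W}))$. Let $\mathcal{T}_n(\mathcal{X})$ be the set of types of alphabet $\mathcal{X}$ and length $n$, and $\gamma_n=\frac12(n+1)^{-|\mathcal{X}|}$. Then \[ \varepsilon^{\rm NS}\big(M,\mathcal{W}^{\otimes n}\otimes\mathcal{I}_2\big)\ge\inf_{T\in\mathcal{T}_n(\mathcal{X})}\sup_{\sigma\in\mathcal{S}(\mathcal{H}),\,s\ge0}\Big\{\gamma_n\,\mathrm{Tr}\big[W_T^{\otimes n}\wedge Ms\,\sigma^{\otimes n}\big]-s\Big\}, \] where $W_T^{\otimes n}=\bigotimes_{x\in\mathcal{X}}W_x^{\otimes nT_x}$.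
   Context: $\mathcal{H}$ finite-dimensional Hilbert space, $\mathcal{S}(\mathcal{H})$ its density operators. A classical-quantum channel is $\mathcal{W}=\{W_x\}_{x\in\mathcal{X}}\subset\mathcal{S}(\mathcal{H})$. A type of length $n$ on $\mathcal{X}$ is a distribution $T=(T_x)_{x\in\mathcal{X}}$ with $nT_x\in\mathbb{N}$ for all $x$. For Hermitian $X=\sum_i\lambda_i\Pi_i$: $|X|=\sum_i|\lambda_i|\Pi_i$, and $A\wedge B=\frac12(A+B-|A-B|)$. For $M>0$: $1-\varepsilon^{\rm NS}(M,\mathcal{W})=\sup\{\frac1M\sum_x\mathrm{Tr}[\Lambda_xW_x]:\sum_x\Lambda_x=\mathbb{I},\ 0\preccurlyeq\Lambda_x\preccurlyeq p(x)\mathbb{I},\ p(x)\ge0,\ \sum_xp(x)=M\}$. $\mathcal{W}^{\otimes n}$ has alphabet $\mathcal{X}^n$ and outputs $W_{x_1}\otimes\cdots\otimes W_{x_n}$; $\mathcal{I}_2$ is the cq channel on $\{1,2\}$ with outputs $|i\rangle\langle i|$; $\mathcal{W}\otimes\mathcal{I}_2$ has alphabet $\mathcal{X}\times\{1,2\}$ and outputs $W_x\otimes|i\rangle\langle i|$. With the Petz Rényi divergence $D_\alpha(\rho\|\sigma)=\frac1{\alpha-1}\log\mathrm{Tr}[\rho^\alpha\sigma^{1-\alpha}]$ ($\alpha\in(0,1)$), $D_1$ the Umegaki relative entropy and $D_0(\rho\|\sigma)=-\log\mathrm{Tr}[\rho^0\sigma]$ ($\rho^0$ the support projection), $C_\alpha(\mathcal{W})=\sup_{p\in\mathcal{P}(\mathcal{X})}\inf_{\sigma}\sum_xp(x)D_\alpha(W_x\|\sigma)$,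 $C(\mathcal{W})=C_1(\mathcal{W})$. *)

theory Defs
  imports "Jordan_Normal_Form.Schur_Decomposition" "HOL-Library.Extended_Real"
begin

definition mtrace :: "complex mat \<Rightarrow> complex" where
  "mtrace A = (\<Sum>i<dim_row A. A $$ (i, i))"

definition hermitian_mat :: "nat \<Rightarrow> complex mat \<Rightarrow> bool" where
  "hermitian_mat d A \<longleftrightarrow> A \<in> carrier_mat d d \<and> mat_adjoint A = A"

definition psd_mat :: "nat \<Rightarrow> complex mat \<Rightarrow> bool" where
  "psd_mat d A \<longleftrightarrow> hermitian_mat d A \<and>
     (\<forall>v \<in> carrier_vec d. Re (((A *\<^sub>v v) \<bullet>c v)) \<ge> 0 \<and> Im (((A *\<^sub>v v) \<bullet>c v)) = 0)"

definition loewner_le :: "nat \<Rightarrow> complex mat \<Rightarrow> complex mat \<Rightarrow> bool" where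
  "loewner_le d A B \<longleftrightarrow> hermitian_mat d A \<and> hermitian_mat d B \<and> psd_mat d (B - A)"

definition density_ops :: "nat \<Rightarrow> complex mat set" where
  "density_ops d = {\<rho>. psd_mat d \<rho> \<and> mtrace \<rho> = 1}"

definition unitary_mat :: "nat \<Rightarrow> complex mat \<Rightarrow> bool" where
  "unitary_mat d U \<longleftrightarrow> U \<in> carrier_mat d d \<and> U * mat_adjoint U = 1\<^sub>m d \<and> mat_adjoint U * U = 1\<^sub>m d"

definition real_diag_mat :: "nat \<Rightarrow> (nat \<Rightarrow> real) \<Rightarrow> complex mat" where
  "real_diag_mat d l = mat d d (\<lambda>(i,j). if i = j then complex_of_real (l i) else 0)"

text \<open>Functional calculus via the spectral decomposition X = U diag(l) U^*:
  f(X) = U diag(f l) U^*. (Meaningful for Hermitian X.)\<close>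
definition mat_fun :: "nat \<Rightarrow> (real \<Rightarrow> real) \<Rightarrow> complex mat \<Rightarrow> complex mat" where
  "mat_fun d f X = (SOME Y. \<exists>U l. unitary_mat d U \<and> X = U * real_diag_mat d l * mat_adjoint U
                                   \<and> Y = U * real_diag_mat d (f \<circ> l) * mat_adjoint U)"

definition mat_abs :: "nat \<Rightarrow> complex mat \<Rightarrow> complex mat" where
  "mat_abs d X = mat_fun d abs X"

definition mat_wedge :: "nat \<Rightarrow> complex mat \<Rightarrow> complex mat \<Rightarrow> complex mat" where
  "mat_wedge d A B = (1/2 :: complex) \<cdot>\<^sub>m (A + B - mat_abs d (A - B))"

definition kron :: "complex mat \<Rightarrow> complex mat \<Rightarrow> complex mat" where
  "kron A B = mat (dim_row A * dim_row B) (dim_col A * dim_col B)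
     (\<lambda>(i,j). A $$ (i div dim_row B, j div dim_col B) * B $$ (i mod dim_row B, j mod dim_col B))"

fun kron_list :: "complex mat list \<Rightarrow> complex mat" where
  "kron_list [] = 1\<^sub>m 1"
| "kron_list (A # As) = kron A (kron_list As)"

text \<open>|i><i| on C^2, for i \<in> {0,1} (playing the role of {1,2}).\<close>
definition ket_bra2 :: "nat \<Rightarrow> complex mat" where
  "ket_bra2 i = mat 2 2 (\<lambda>(j,k). if j = i \<and> k = i then 1 else 0)"

text \<open>Powers rho^a for a > 0 via the functional calculus (0^a = 0);
  support projection rho^0.\<close>
definition mat_pow :: "nat \<Rightarrow> complex mat \<Rightarrow> real \<Rightarrow> complex mat" where
  "mat_pow d \<rho> a = mat_fun d (\<lambda>t. t powr a) \<rho>"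

definition supp_proj :: "nat \<Rightarrow> complex mat \<Rightarrow> complex mat" where
  "supp_proj d \<rho> = mat_fun d (\<lambda>t. if t = 0 then 0 else 1) \<rho>"

text \<open>Logarithm on the support (0 log 0 = 0 convention).\<close>
definition mat_log :: "nat \<Rightarrow> complex mat \<Rightarrow> complex mat" where
  "mat_log d \<rho> = mat_fun d (\<lambda>t. if t = 0 then 0 else ln t) \<rho>"

definition D_zero :: "nat \<Rightarrow> complex mat \<Rightarrow> complex mat \<Rightarrow> ereal" where
  "D_zero d \<rho> \<sigma> = (let t = Re (mtrace (supp_proj d \<rho> * \<sigma>)) in
     if t \<le> 0 then \<infinity> else ereal (- ln t))"

definition D_petz :: "nat \<Rightarrow> real \<Rightarrow> complex mat \<Rightarrow> complex mat \<Rightarrow> ereal" where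
  "D_petz d \<alpha> \<rho> \<sigma> = (let t = Re (mtrace (mat_pow d \<rho> \<alpha> * mat_pow d \<sigma> (1 - \<alpha>))) in
     if t \<le> 0 then \<infinity> else ereal (ln t / (\<alpha> - 1)))"

text \<open>Umegaki relative entropy; +\<infinity> unless supp rho \<subseteq> supp sigma.\<close>
definition D_umegaki :: "nat \<Rightarrow> complex mat \<Rightarrow> complex mat \<Rightarrow> ereal" where
  "D_umegaki d \<rho> \<sigma> =
     (if \<forall>v \<in> carrier_vec d. \<sigma> *\<^sub>v v = 0\<^sub>v d \<longrightarrow> \<rho> *\<^sub>v v = 0\<^sub>v d
      then ereal (Re (mtrace (\<rho> * (mat_log d \<rho> - mat_log d \<sigma>)))) else \<infinity>)"

definition D_alpha :: "nat \<Rightarrow> real \<Rightarrow> complex mat \<Rightarrow> complex mat \<Rightarrow> ereal" where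
  "D_alpha d \<alpha> \<rho> \<sigma> = (if \<alpha> = 0 then D_zero d \<rho> \<sigma>
                         else if \<alpha> = 1 then D_umegaki d \<rho> \<sigma> else D_petz d \<alpha> \<rho> \<sigma>)"

definition prob_dists :: "('x::finite \<Rightarrow> real) set" where
  "prob_dists = {p. (\<forall>x. p x \<ge> 0) \<and> (\<Sum>x\<in>UNIV. p x) = 1}"

definition cq_capacity :: "nat \<Rightarrow> real \<Rightarrow> ('x::finite \<Rightarrow> complex mat) \<Rightarrow> ereal" where
  "cq_capacity d \<alpha> W = (SUP p \<in> prob_dists. INF \<sigma> \<in> density_ops d.
       (\<Sum>x\<in>UNIV. ereal (p x) * D_alpha d \<alpha> (W x) \<sigma>))"

definition eps_NS :: "real \<Rightarrow> 'a set \<Rightarrow> ('a \<Rightarrow> complex mat) \<Rightarrow> nat \<Rightarrow> real" where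
  "eps_NS M A W D = 1 - Sup {(1 / M) * (\<Sum>x\<in>A. Re (mtrace (\<Lambda> x * W x))) | \<Lambda> p.
       mat D D (\<lambda>ij. \<Sum>x\<in>A. \<Lambda> x $$ ij) = 1\<^sub>m D \<and>
       (\<forall>x\<in>A. p x \<ge> 0 \<and> loewner_le D (0\<^sub>m D D) (\<Lambda> x)
               \<and> loewner_le D (\<Lambda> x) (complex_of_real (p x) \<cdot>\<^sub>m 1\<^sub>m D)) \<and>
       (\<Sum>x\<in>A. p x) = M}"

definition is_cq_channel :: "nat \<Rightarrow> ('x \<Rightarrow> complex mat) \<Rightarrow> bool" where
  "is_cq_channel d W \<longleftrightarrow> (\<forall>x. W x \<in> density_ops d)"

text \<open>Outputs of W^{\<otimes>n} \<otimes> I_2 on the alphabet X^n \<times> {1,2} (here lists of length n times {0,1}).\<close>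
definition tensor_channel_I2 :: "('x \<Rightarrow> complex mat) \<Rightarrow> 'x list \<times> nat \<Rightarrow> complex mat" where
  "tensor_channel_I2 W = (\<lambda>(xs, i). kron (kron_list (map W xs)) (ket_bra2 i))"

definition types_n :: "nat \<Rightarrow> ('x::finite \<Rightarrow> real) set" where
  "types_n n = {T. T \<in> prob_dists \<and> (\<forall>x. \<exists>k::nat. real n * T x = real k)}"

text \<open>W_T^{\<otimes>n} = \<Otimes>_x W_x^{\<otimes> n T_x}, with factors in some order determined by a
  sequence of length n having n T_x occurrences of each x.\<close>
definition W_type_tensor :: "nat \<Rightarrow> ('x::finite \<Rightarrow> complex mat) \<Rightarrow> ('x \<Rightarrow> real) \<Rightarrow> complex mat" where
  "W_type_tensor n W T = kron_list (map W (SOME xs. length xs = n \<and>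
       (\<forall>x. real (count_list xs x) = real n * T x)))"

end

theory Submission
  imports Defs "HOL-Combinatorics.List_Permutation"
begin

lemma dim_mat_adjoint [simp]:
  "dim_row (mat_adjoint A) = dim_col A" "dim_col (mat_adjoint A) = dim_row A"
  unfolding mat_adjoint_def by (auto simp: mat_of_rows_def)

lemma index_mat_adjoint [simp]:
  "i < dim_col A \<Longrightarrow> j < dim_row A \<Longrightarrow> mat_adjoint A $$ (i, j) = cnj (A $$ (j, i))"
  unfolding mat_adjoint_def mat_of_rows_def by simp

lemma mat_adjoint_carrier [simp]: "A \<in> carrier_mat n m \<Longrightarrow> mat_adjoint A \<in> carrier_mat m n"
  unfolding carrier_mat_def by simp

lemma index_real_diag_mat [simp]:
  "i < d \<Longrightarrow> j < d \<Longrightarrow> real_diag_mat d l $$ (i, j) = (if i = j then complex_of_real (l i) else 0)"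
  "dim_row (real_diag_mat d l) = d" "dim_col (real_diag_mat d l) = d"
  unfolding real_diag_mat_def by simp_all

lemma real_diag_mat_carrier [simp]: "real_diag_mat d l \<in> carrier_mat d d"
  by (rule carrier_matI) simp_all

lemma index_mult_mat_sum:
  "A \<in> carrier_mat n m \<Longrightarrow> B \<in> carrier_mat m k \<Longrightarrow> i < n \<Longrightarrow> j < k \<Longrightarrow>
   (A * B) $$ (i, j) = (\<Sum>q<m. A $$ (i, q) * B $$ (q, j))"
  unfolding carrier_mat_def by (simp add: scalar_prod_def atLeast0LessThan)

lemma spectral_form_carrier [simp]:
  "U \<in> carrier_mat N N \<Longrightarrow> U * real_diag_mat N l * mat_adjoint U \<in> carrier_mat N N"
  by (meson mat_adjoint_carrier mult_carrier_mat real_diag_mat_carrier)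

lemma index_spectral_form:
  assumes U: "U \<in> carrier_mat N N" and i: "i < N" and j: "j < N"
  shows "(U * real_diag_mat N l * mat_adjoint U) $$ (i, j) =
    (\<Sum>k<N. U $$ (i, k) * complex_of_real (l k) * cnj (U $$ (j, k)))"
proof -
  have UD: "U * real_diag_mat N l \<in> carrier_mat N N" using U by simp
  have "(U * real_diag_mat N l) $$ (i, k) = U $$ (i, k) * complex_of_real (l k)" if k: "k < N" for k
  proof -
    have "(U * real_diag_mat N l) $$ (i, k) = (\<Sum>q<N. U $$ (i, q) * real_diag_mat N l $$ (q, k))"
      by (rule index_mult_mat_sum[OF U real_diag_mat_carrier i k])
    also have "\<dots> = (\<Sum>q<N. if q = k then U $$ (i, k) * complex_of_real (l k) else 0)"
      using k by (intro sum.cong) auto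
    finally show ?thesis using k by simp
  qed
  thus ?thesis
    using index_mult_mat_sum[OF UD mat_adjoint_carrier[OF U] i j] U j by simp
qed

lemma mat_adjoint_mult:
  fixes A B :: "complex mat"
  assumes A: "A \<in> carrier_mat n m" and B: "B \<in> carrier_mat m k"
  shows "mat_adjoint (A * B) = mat_adjoint B * mat_adjoint A"
proof (rule eq_matI)
  fix i j assume "i < dim_row (mat_adjoint B * mat_adjoint A)" "j < dim_col (mat_adjoint B * mat_adjoint A)"
  hence i: "i < k" and j: "j < n" using A B by auto
  have "mat_adjoint (A * B) $$ (i, j) = cnj (\<Sum>q<m. A $$ (j, q) * B $$ (q, i))"
    using index_mult_mat_sum[OF A B j i] A B i j by simp
  also have "\<dots> = (\<Sum>q<m. mat_adjoint B $$ (i, q) * mat_adjoint A $$ (q, j))"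
    using A B i j by (simp add: mult.commute)
  also have "\<dots> = (mat_adjoint B * mat_adjoint A) $$ (i, j)"
    using index_mult_mat_sum[OF mat_adjoint_carrier[OF B] mat_adjoint_carrier[OF A] i j] by simp
  finally show "mat_adjoint (A * B) $$ (i, j) = (mat_adjoint B * mat_adjoint A) $$ (i, j)" .
qed (use A B in simp_all)

lemma mat_adjoint_adjoint: "(A :: complex mat) \<in> carrier_mat n m \<Longrightarrow> mat_adjoint (mat_adjoint A) = A"
  by (rule eq_matI) (simp_all add: carrier_matD)

lemma unitary_mat_carrier: "unitary_mat N U \<Longrightarrow> U \<in> carrier_mat N N"
  unfolding unitary_mat_def by simp

lemma unitary_mat_cols:
  assumes "unitary_mat N U" "i < N" "j < N"
  shows "(\<Sum>k<N. cnj (U $$ (k, i)) * U $$ (k, j)) = (if i = j then 1 else 0)"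
proof -
  have U: "U \<in> carrier_mat N N" and "mat_adjoint U * U = 1\<^sub>m N"
    using assms unfolding unitary_mat_def by auto
  thus ?thesis using index_mult_mat_sum[OF mat_adjoint_carrier[OF U] U assms(2,3)] assms by simp
qed

lemma unitary_mat_rows:
  assumes "unitary_mat N U" "i < N" "j < N"
  shows "(\<Sum>k<N. U $$ (i, k) * cnj (U $$ (j, k))) = (if i = j then 1 else 0)"
proof -
  have U: "U \<in> carrier_mat N N" and "U * mat_adjoint U = 1\<^sub>m N"
    using assms unfolding unitary_mat_def by auto
  thus ?thesis using index_mult_mat_sum[OF U mat_adjoint_carrier[OF U] assms(2,3)] assms by simp
qed

lemma unitary_matI_cols:
  assumes U: "U \<in> carrier_mat N N"
    and cols: "\<And>i j. i < N \<Longrightarrow> j < N \<Longrightarrow>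
      (\<Sum>k<N. cnj (U $$ (k, i)) * U $$ (k, j)) = (if i = j then 1 else 0)"
  shows "unitary_mat N U"
proof -
  have left: "mat_adjoint U * U = 1\<^sub>m N"
    by (rule eq_matI) (use U cols index_mult_mat_sum[OF mat_adjoint_carrier[OF U] U] in auto)
  moreover have "U * mat_adjoint U = 1\<^sub>m N"
    by (rule mat_mult_left_right_inverse[OF mat_adjoint_carrier[OF U] U left])
  ultimately show ?thesis using U unfolding unitary_mat_def by simp
qed

lemma unitary_mat_mult:
  assumes U: "unitary_mat N U" and V: "unitary_mat N V"
  shows "unitary_mat N (U * V)"
proof -
  have Uc: "U \<in> carrier_mat N N" and Vc: "V \<in> carrier_mat N N" using U V unitary_mat_carrier by auto
  have "mat_adjoint (U * V) * (U * V) = mat_adjoint V * ((mat_adjoint U * U) * V)"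
    using Uc Vc by (simp add: mat_adjoint_mult assoc_mult_mat[of _ N N _ N _ N])
  also have "\<dots> = 1\<^sub>m N" using U V Vc unfolding unitary_mat_def by simp
  finally have left: "mat_adjoint (U * V) * (U * V) = 1\<^sub>m N" .
  moreover have "(U * V) * mat_adjoint (U * V) = 1\<^sub>m N"
    by (rule mat_mult_left_right_inverse[OF _ _ left]) (use Uc Vc in auto)
  ultimately show ?thesis using Uc Vc unfolding unitary_mat_def by simp
qed

text \<open>Gram--Schmidt applied to a basis completion of \<open>v\<close>, followed by normalisation.\<close>
lemma unitary_mat_first_col:
  fixes v :: "complex vec"
  assumes v: "v \<in> carrier_vec N" and v0: "v \<noteq> 0\<^sub>v N"
  obtains W c where "unitary_mat N W" "col W 0 = c \<cdot>\<^sub>v v"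
proof -
  interpret cof_vec_space N "TYPE(complex)" .
  define b where "b = basis_completion v"
  define ws where "ws = gram_schmidt N b"
  from basis_completion[OF v v0, folded b_def]
  have b: "distinct b" "\<not> lin_dep (set b)" "set b \<subseteq> carrier_vec N" "hd b = v" "length b = N"
    by auto
  moreover have "N \<noteq> 0" using v v0 by auto
  ultimately obtain vs where bv: "b = v # vs" by (cases b) auto
  from gram_schmidt_result[OF b(3,1,2) refl, folded ws_def]
  have ws: "set ws \<subseteq> carrier_vec N" "corthogonal ws" "length ws = N" by (auto simp: b(5))
  have "hd ws = v" using gram_schmidt_hd[OF v, of vs] unfolding ws_def bv .
  hence ws0: "ws ! 0 = v" using ws(3) b(5) bv by (cases ws) auto
  define nr where "nr j = sqrt (\<Sum>i<N. (cmod ((ws ! j) $ i))\<^sup>2)" for j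
  have wsc: "ws ! j \<in> carrier_vec N" if "j < N" for j using ws that by auto
  have cdot: "(ws ! j) \<bullet>c (ws ! i) = (\<Sum>k<N. (ws ! j) $ k * cnj ((ws ! i) $ k))" if "i < N" "j < N" for i j
    using wsc[OF that(1)] wsc[OF that(2)] by (simp add: scalar_prod_def atLeast0LessThan)
  have self: "(ws ! j) \<bullet>c (ws ! j) = complex_of_real ((nr j)\<^sup>2)" if "j < N" for j
    unfolding cdot[OF that that] nr_def
    by (simp add: sum_nonneg complex_norm_square[symmetric])
  have nr0: "nr j \<noteq> 0" if "j < N" for j
    using self[OF that] ws(2,3) that unfolding corthogonal_def by auto
  define W where "W = mat N N (\<lambda>(i, j). (ws ! j) $ i / complex_of_real (nr j))"
  have "unitary_mat N W"
  proof (rule unitary_matI_cols)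
    fix i j assume i: "i < N" and j: "j < N"
    have "(\<Sum>k<N. cnj (W $$ (k, i)) * W $$ (k, j)) =
        (ws ! j) \<bullet>c (ws ! i) / (complex_of_real (nr i) * complex_of_real (nr j))"
      unfolding cdot[OF i j] sum_divide_distrib W_def by (intro sum.cong refl) (simp add: i j field_simps)
    also have "\<dots> = (if i = j then 1 else 0)"
      using self[OF j] nr0[OF j] ws(2,3) i j unfolding corthogonal_def by (auto simp: power2_eq_square)
    finally show "(\<Sum>k<N. cnj (W $$ (k, i)) * W $$ (k, j)) = (if i = j then 1 else 0)" .
  qed (simp add: W_def)
  moreover have "col W 0 = complex_of_real (1 / nr 0) \<cdot>\<^sub>v v"
    using v0 v ws0 unfolding W_def by (cases N) (auto simp: col_def)
  ultimately show thesis by (rule that)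
qed

definition block_one_mat :: "nat \<Rightarrow> complex mat \<Rightarrow> complex mat" where
  "block_one_mat N U = mat (Suc N) (Suc N) (\<lambda>(i, j).
     if i = 0 \<or> j = 0 then (if i = j then 1 else 0) else U $$ (i - 1, j - 1))"

lemma block_one_mat_carrier [simp]: "block_one_mat N U \<in> carrier_mat (Suc N) (Suc N)"
  unfolding block_one_mat_def by simp

lemma dim_block_one_mat [simp]:
  "dim_row (block_one_mat N U) = Suc N" "dim_col (block_one_mat N U) = Suc N"
  unfolding block_one_mat_def by simp_all

lemma index_block_one_mat [simp]:
  "block_one_mat N U $$ (0, 0) = 1"
  "j < N \<Longrightarrow> block_one_mat N U $$ (0, Suc j) = 0"
  "j < N \<Longrightarrow> block_one_mat N U $$ (Suc j, 0) = 0"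
  "i < N \<Longrightarrow> j < N \<Longrightarrow> block_one_mat N U $$ (Suc i, Suc j) = U $$ (i, j)"
  unfolding block_one_mat_def by auto

lemma unitary_block_one_mat:
  assumes U: "unitary_mat N U"
  shows "unitary_mat (Suc N) (block_one_mat N U)"
proof (rule unitary_matI_cols[OF block_one_mat_carrier])
  fix i j assume "i < Suc N" "j < Suc N"
  then show "(\<Sum>k<Suc N. cnj (block_one_mat N U $$ (k, i)) * block_one_mat N U $$ (k, j)) =
      (if i = j then 1 else 0)"
    using unitary_mat_cols[OF U, of "i - 1" "j - 1"]
    by (cases i; cases j) (simp_all add: sum.lessThan_Suc_shift del: sum.lessThan_Suc)
qed

lemma spectral_form_block_one:
  assumes U: "U \<in> carrier_mat N N" and i: "i < Suc N" and j: "j < Suc N"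
  shows "(block_one_mat N U * real_diag_mat (Suc N) l * mat_adjoint (block_one_mat N U)) $$ (i, j) =
    (if i = 0 \<and> j = 0 then complex_of_real (l 0)
     else if i = 0 \<or> j = 0 then 0
     else (U * real_diag_mat N (l \<circ> Suc) * mat_adjoint U) $$ (i - 1, j - 1))"
  unfolding index_spectral_form[OF block_one_mat_carrier i j] using i j
  by (cases i; cases j)
     (simp_all add: index_spectral_form[OF U] sum.lessThan_Suc_shift del: sum.lessThan_Suc)

lemma hermitian_unitary_conj:
  fixes A W :: "complex mat"
  assumes A: "A \<in> carrier_mat N N" "mat_adjoint A = A" and W: "W \<in> carrier_mat N N"
  shows "mat_adjoint (mat_adjoint W * A * W) = mat_adjoint W * A * W"
proof -
  have "mat_adjoint (mat_adjoint W * A * W) = mat_adjoint W * mat_adjoint (mat_adjoint W * A)"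
    by (rule mat_adjoint_mult[OF mult_carrier_mat[OF mat_adjoint_carrier[OF W] A(1)] W])
  also have "mat_adjoint (mat_adjoint W * A) = A * W"
    using mat_adjoint_mult[OF mat_adjoint_carrier[OF W] A(1)] mat_adjoint_adjoint[OF W] A(2) by simp
  finally show ?thesis using A W by (simp add: assoc_mult_mat[of _ N N _ N _ N])
qed

theorem hermitian_spectral_decomposition:
  fixes A :: "complex mat"
  assumes "A \<in> carrier_mat N N" "mat_adjoint A = A"
  shows "\<exists>U l. unitary_mat N U \<and> A = U * real_diag_mat N l * mat_adjoint U"
  using assms
proof (induction N arbitrary: A)
  case 0
  have "unitary_mat 0 (1\<^sub>m 0)" unfolding unitary_mat_def by (auto intro!: eq_matI)
  moreover have "A = 1\<^sub>m 0 * real_diag_mat 0 l * mat_adjoint (1\<^sub>m 0)" for l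
    by (rule eq_matI) (use 0 in \<open>simp_all add: carrier_matD\<close>)
  ultimately show ?case by blast
next
  case (Suc m A)
  have A: "A \<in> carrier_mat (Suc m) (Suc m)" and Ah: "mat_adjoint A = A" by fact+
  obtain e es where "char_poly A = (\<Prod>a\<leftarrow>e # es. [:- a, 1:])"
    using char_poly_factorized[OF A] by (metis length_0_conv neq_Nil_conv nat.distinct(1))
  hence "eigenvalue A e" using eigenvalue_root_char_poly[OF A] by simp
  then obtain v where v: "v \<in> carrier_vec (Suc m)" "v \<noteq> 0\<^sub>v (Suc m)" and eig: "A *\<^sub>v v = e \<cdot>\<^sub>v v"
    unfolding eigenvalue_def eigenvector_def using A by auto
  obtain W c where W: "unitary_mat (Suc m) W" and Wv: "col W 0 = c \<cdot>\<^sub>v v"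
    using unitary_mat_first_col[OF v] .
  have Wc: "W \<in> carrier_mat (Suc m) (Suc m)" using W by (rule unitary_mat_carrier)
  define A' where "A' = mat_adjoint W * A * W"
  have A'c: "A' \<in> carrier_mat (Suc m) (Suc m)"
    unfolding A'_def using A Wc by (meson mat_adjoint_carrier mult_carrier_mat)
  have A'h: "A' $$ (i, j) = cnj (A' $$ (j, i))" if "i < Suc m" "j < Suc m" for i j
    using hermitian_unitary_conj[OF A Ah Wc, folded A'_def] A'c that
    by (metis carrier_matD index_mat_adjoint)
  txt \<open>\<open>W\<close> maps the first basis vector to an eigenvector, so \<open>A'\<close> has first column \<open>e\<close> times it.\<close>
  have A'col0: "A' $$ (i, 0) = (if i = 0 then e else 0)" if i: "i < Suc m" for i
  proof -
    have "col (A * W) 0 = A *\<^sub>v (c \<cdot>\<^sub>v v)" using col_mult2[OF A Wc, of 0] by (simp add: Wv)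
    also have "\<dots> = e \<cdot>\<^sub>v col W 0"
      using A v(1) by (simp add: Wv mult_mat_vec eig smult_smult_assoc mult.commute)
    finally have colAW: "col (A * W) 0 = e \<cdot>\<^sub>v col W 0" .
    have AW: "(A * W) $$ (k, 0) = e * W $$ (k, 0)" if "k < Suc m" for k
      using arg_cong[OF colAW, of "\<lambda>w. w $ k"] A Wc that by simp
    have "A' $$ (i, 0) = (\<Sum>k<Suc m. cnj (W $$ (k, i)) * (A * W) $$ (k, 0))"
      unfolding A'_def assoc_mult_mat[OF mat_adjoint_carrier[OF Wc] A Wc]
      using index_mult_mat_sum[OF mat_adjoint_carrier[OF Wc] mult_carrier_mat[OF A Wc] i] i Wc by simp
    also have "\<dots> = (\<Sum>k<Suc m. cnj (W $$ (k, i)) * (e * W $$ (k, 0)))" by (simp add: AW)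
    also have "\<dots> = e * (\<Sum>k<Suc m. cnj (W $$ (k, i)) * W $$ (k, 0))"
      by (simp add: sum_distrib_left mult.left_commute del: sum.lessThan_Suc)
    finally show ?thesis using unitary_mat_cols[OF W i] by simp
  qed
  define A3 where "A3 = mat m m (\<lambda>(i, j). A' $$ (Suc i, Suc j))"
  have "mat_adjoint A3 = A3"
  proof (rule eq_matI)
    fix i j assume "i < dim_row A3" "j < dim_col A3"
    then show "mat_adjoint A3 $$ (i, j) = A3 $$ (i, j)"
      using A'h[of "Suc i" "Suc j"] by (simp add: A3_def)
  qed (simp_all add: A3_def)
  moreover have "A3 \<in> carrier_mat m m" by (simp add: A3_def)
  ultimately obtain U3 l3 where U3: "unitary_mat m U3" and A3d: "A3 = U3 * real_diag_mat m l3 * mat_adjoint U3"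
    using Suc.IH by blast
  define F where "F = block_one_mat m U3"
  define l where "l i = (if i = 0 then Re (A' $$ (0, 0)) else l3 (i - 1))" for i
  have FDF: "F * real_diag_mat (Suc m) l * mat_adjoint F = A'"
  proof (rule eq_matI)
    fix i j assume "i < dim_row A'" "j < dim_col A'"
    hence i: "i < Suc m" and j: "j < Suc m" using A'c by auto
    have "A' $$ (0, 0) \<in> \<real>" unfolding Reals_cnj_iff using A'h[of 0 0] by (metis zero_less_Suc)
    hence "A' $$ (0, 0) = complex_of_real (l 0)" by (simp add: l_def)
    moreover have "A' $$ (0, Suc k) = 0" if "k < m" for k
      using A'h[of 0 "Suc k"] A'col0[of "Suc k"] that by simp
    moreover have "l \<circ> Suc = l3" by (auto simp: l_def)
    ultimately show "(F * real_diag_mat (Suc m) l * mat_adjoint F) $$ (i, j) = A' $$ (i, j)"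
      unfolding F_def spectral_form_block_one[OF unitary_mat_carrier[OF U3] i j]
        \<open>l \<circ> Suc = l3\<close> A3d[symmetric]
      using i j A'col0 by (cases i; cases j) (auto simp: A3_def)
  qed (use A'c in \<open>auto simp: F_def\<close>)
  have "W * A' * mat_adjoint W = (W * mat_adjoint W) * A * (W * mat_adjoint W)"
    unfolding A'_def using Wc A
    by (simp add: assoc_mult_mat[of _ "Suc m" "Suc m" _ "Suc m" _ "Suc m"]
        mult_carrier_mat[of _ "Suc m" "Suc m"])
  hence "A = W * A' * mat_adjoint W" using W A unfolding unitary_mat_def by simp
  also have "\<dots> = (W * F) * real_diag_mat (Suc m) l * mat_adjoint (W * F)"
    unfolding FDF[symmetric] F_def mat_adjoint_mult[OF Wc block_one_mat_carrier] using Wc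
    by (simp add: assoc_mult_mat[of _ "Suc m" "Suc m" _ "Suc m" _ "Suc m"]
        mult_carrier_mat[of _ "Suc m" "Suc m"])
  finally show ?case
    using unitary_mat_mult[OF W unitary_block_one_mat[OF U3]] unfolding F_def by blast
qed

lemma mat_fun_spectral:
  assumes "hermitian_mat N X"
  obtains U l where "unitary_mat N U" "X = U * real_diag_mat N l * mat_adjoint U"
    "mat_fun N f X = U * real_diag_mat N (f \<circ> l) * mat_adjoint U"
proof -
  have "\<exists>Y U l. unitary_mat N U \<and> X = U * real_diag_mat N l * mat_adjoint U
      \<and> Y = U * real_diag_mat N (f \<circ> l) * mat_adjoint U"
    using hermitian_spectral_decomposition assms unfolding hermitian_mat_def by blast
  from someI_ex[OF this] show thesis unfolding mat_fun_def[symmetric] using that by blast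
qed

lemma mtrace_carrier_mat: assumes "A \<in> carrier_mat N N" shows "mtrace A = (\<Sum>a<N. A $$ (a,a))"
  unfolding mtrace_def using carrier_matD(1)[OF assms] by simp

lemma sum_swap3: "(\<Sum>a\<in>A. \<Sum>b\<in>B. \<Sum>k\<in>C. f a b k) = (\<Sum>k\<in>C. \<Sum>a\<in>A. \<Sum>b\<in>B. f a b k)"
proof -
  have "(\<Sum>a\<in>A. \<Sum>b\<in>B. \<Sum>k\<in>C. f a b k) = (\<Sum>a\<in>A. \<Sum>k\<in>C. \<Sum>b\<in>B. f a b k)"
    by (rule sum.cong[OF refl], rule sum.swap)
  also have "\<dots> = (\<Sum>k\<in>C. \<Sum>a\<in>A. \<Sum>b\<in>B. f a b k)" by (rule sum.swap)
  finally show ?thesis .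
qed

definition quad_form :: "nat \<Rightarrow> complex mat \<Rightarrow> (nat \<Rightarrow> complex) \<Rightarrow> complex" where
  "quad_form N Y u = (\<Sum>a<N. \<Sum>b<N. cnj (u a) * Y $$ (a, b) * u b)"

definition cinner :: "nat \<Rightarrow> (nat \<Rightarrow> complex) \<Rightarrow> (nat \<Rightarrow> complex) \<Rightarrow> complex" where
  "cinner N v u = (\<Sum>b<N. cnj (v b) * u b)"

definition norm_sq :: "nat \<Rightarrow> (nat \<Rightarrow> complex) \<Rightarrow> real" where
  "norm_sq N u = (\<Sum>b<N. (cmod (u b))\<^sup>2)"

lemma cnj_cinner_mult: "cnj (cinner N v u) * cinner N w u' = (\<Sum>a<N. \<Sum>b<N. (v a * cnj (u a)) * (cnj (w b) * u' b))"
  unfolding cinner_def by (simp add: sum_product)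

lemma cnj_mult_self: "cnj z * z = complex_of_real ((cmod z)^2)"
  using complex_norm_square[of z] by (simp add: mult.commute)

lemma quad_form_spectral:
  assumes U: "unitary_mat N U"
  shows "quad_form N (U * real_diag_mat N l * mat_adjoint U) u =
     (\<Sum>k<N. complex_of_real (l k * (cmod (cinner N (\<lambda>b. U $$ (b,k)) u))^2))"
proof -
  have Uc: "U \<in> carrier_mat N N" using U by (rule unitary_mat_carrier)
  have "quad_form N (U * real_diag_mat N l * mat_adjoint U) u =
     (\<Sum>a<N. \<Sum>b<N. \<Sum>k<N. cnj (u a) * (U $$ (a,k) * complex_of_real (l k) * cnj (U $$ (b,k))) * u b)"
    unfolding quad_form_def by (intro sum.cong refl) (simp add: index_spectral_form[OF Uc] sum_distrib_left sum_distrib_right)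
  also have "\<dots> = (\<Sum>k<N. \<Sum>a<N. \<Sum>b<N. cnj (u a) * (U $$ (a,k) * complex_of_real (l k) * cnj (U $$ (b,k))) * u b)"
    by (rule sum_swap3)
  also have "\<dots> = (\<Sum>k<N. complex_of_real (l k) * (cnj (cinner N (\<lambda>b. U $$ (b,k)) u) * cinner N (\<lambda>b. U $$ (b,k)) u))"
    unfolding cnj_cinner_mult sum_distrib_left by (intro sum.cong refl) (simp add: mult_ac)
  also have "\<dots> = (\<Sum>k<N. complex_of_real (l k * (cmod (cinner N (\<lambda>b. U $$ (b,k)) u))^2))"
    by (intro sum.cong refl) (simp add: cnj_mult_self)
  finally show ?thesis .
qed

lemma cinner_unitary_parseval:
  assumes U: "unitary_mat N U"
  shows "(\<Sum>k<N. (cmod (cinner N (\<lambda>b. U $$ (b,k)) u))^2) = norm_sq N u"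
proof -
  have "complex_of_real (\<Sum>k<N. (cmod (cinner N (\<lambda>b. U $$ (b,k)) u))^2) =
        (\<Sum>k<N. cnj (cinner N (\<lambda>b. U $$ (b,k)) u) * cinner N (\<lambda>b. U $$ (b,k)) u)"
    by (simp add: cnj_mult_self)
  also have "\<dots> = (\<Sum>k<N. \<Sum>a<N. \<Sum>b<N. cnj (u a) * u b * (U $$ (a,k) * cnj (U $$ (b,k))))"
    unfolding cnj_cinner_mult by (intro sum.cong refl) (simp add: mult_ac)
  also have "\<dots> = (\<Sum>a<N. \<Sum>b<N. \<Sum>k<N. cnj (u a) * u b * (U $$ (a,k) * cnj (U $$ (b,k))))"
    by (rule sum_swap3[symmetric])
  also have "\<dots> = (\<Sum>a<N. \<Sum>b<N. cnj (u a) * u b * (\<Sum>k<N. U $$ (a,k) * cnj (U $$ (b,k))))"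
    by (simp add: sum_distrib_left)
  also have "\<dots> = (\<Sum>a<N. \<Sum>b<N. if a = b then cnj (u a) * u a else 0)"
    by (intro sum.cong refl) (simp add: unitary_mat_rows[OF U])
  also have "\<dots> = complex_of_real (norm_sq N u)"
    unfolding norm_sq_def by (simp add: cnj_mult_self)
  finally show ?thesis by (metis of_real_eq_iff)
qed

lemma norm_sq_unitary_col:
  assumes U: "unitary_mat N U" and k: "k < N"
  shows "norm_sq N (\<lambda>b. U $$ (b,k)) = 1"
proof -
  have "complex_of_real (norm_sq N (\<lambda>b. U $$ (b,k))) = (\<Sum>b<N. cnj (U $$ (b,k)) * U $$ (b,k))"
    unfolding norm_sq_def by (simp add: cnj_mult_self)
  also have "\<dots> = 1" using unitary_mat_cols[OF U k k] by simp
  finally show ?thesis by (metis of_real_eq_1_iff)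
qed

lemma cinner_unitary_cols:
  assumes U: "unitary_mat N U" and k: "k < N" and j: "j < N"
  shows "cinner N (\<lambda>b. U $$ (b,k)) (\<lambda>b. U $$ (b,j)) = (if k = j then 1 else 0)"
  unfolding cinner_def using unitary_mat_cols[OF U k j] .

lemma quad_form_spectral_col:
  assumes U: "unitary_mat N U" and j: "j < N"
  shows "quad_form N (U * real_diag_mat N l * mat_adjoint U) (\<lambda>b. U $$ (b,j)) = complex_of_real (l j)"
proof -
  have "quad_form N (U * real_diag_mat N l * mat_adjoint U) (\<lambda>b. U $$ (b,j)) =
     (\<Sum>k<N. if k = j then complex_of_real (l j) else 0)"
    unfolding quad_form_spectral[OF U] by (intro sum.cong refl) (simp add: cinner_unitary_cols[OF U _ j])
  also have "\<dots> = complex_of_real (l j)" using j by simp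
  finally show ?thesis .
qed

lemma mtrace_mult_spectral_form:
  assumes U: "unitary_mat N U" and Y: "Y \<in> carrier_mat N N"
  shows "mtrace (Y * (U * real_diag_mat N g * mat_adjoint U)) = (\<Sum>k<N. complex_of_real (g k) * quad_form N Y (\<lambda>b. U $$ (b,k)))"
proof -
  have Uc: "U \<in> carrier_mat N N" using U by (rule unitary_mat_carrier)
  have X: "U * real_diag_mat N g * mat_adjoint U \<in> carrier_mat N N" by (rule spectral_form_carrier[OF Uc])
  have e: "(Y * (U * real_diag_mat N g * mat_adjoint U)) $$ (a,a) =
      (\<Sum>b<N. \<Sum>k<N. Y $$ (a,b) * (U $$ (b,k) * complex_of_real (g k) * cnj (U $$ (a,k))))" if a: "a < N" for a
    unfolding index_mult_mat_sum[OF Y X a a] sum_distrib_left[symmetric] using a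
    by (intro sum.cong refl) (simp add: index_spectral_form[OF Uc])
  have "mtrace (Y * (U * real_diag_mat N g * mat_adjoint U)) =
     (\<Sum>a<N. \<Sum>b<N. \<Sum>k<N. Y $$ (a,b) * (U $$ (b,k) * complex_of_real (g k) * cnj (U $$ (a,k))))"
    unfolding mtrace_carrier_mat[OF mult_carrier_mat[OF Y X]] by (intro sum.cong refl, rule e, simp)
  also have "\<dots> = (\<Sum>k<N. \<Sum>a<N. \<Sum>b<N. Y $$ (a,b) * (U $$ (b,k) * complex_of_real (g k) * cnj (U $$ (a,k))))"
    by (rule sum_swap3)
  also have "\<dots> = (\<Sum>k<N. complex_of_real (g k) * quad_form N Y (\<lambda>b. U $$ (b,k)))"
    unfolding quad_form_def sum_distrib_left by (intro sum.cong refl) (simp add: mult_ac)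
  finally show ?thesis .
qed

lemma mtrace_spectral_form:
  assumes U: "unitary_mat N U"
  shows "mtrace (U * real_diag_mat N g * mat_adjoint U) = complex_of_real (\<Sum>k<N. g k)"
proof -
  have Uc: "U \<in> carrier_mat N N" using U by (rule unitary_mat_carrier)
  have X: "U * real_diag_mat N g * mat_adjoint U \<in> carrier_mat N N" by (rule spectral_form_carrier[OF Uc])
  have e: "(U * real_diag_mat N g * mat_adjoint U) $$ (a,a) = (\<Sum>k<N. complex_of_real (g k) * (cnj (U $$ (a,k)) * U $$ (a,k)))"
    if a: "a < N" for a
    unfolding index_spectral_form[OF Uc a a] by (intro sum.cong refl) (simp add: mult_ac)
  have "mtrace (U * real_diag_mat N g * mat_adjoint U) = (\<Sum>a<N. (U * real_diag_mat N g * mat_adjoint U) $$ (a,a))"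
    by (rule mtrace_carrier_mat[OF X])
  also have "\<dots> = (\<Sum>a<N. \<Sum>k<N. complex_of_real (g k) * (cnj (U $$ (a,k)) * U $$ (a,k)))"
    by (intro sum.cong refl, rule e, simp)
  also have "\<dots> = (\<Sum>k<N. \<Sum>a<N. complex_of_real (g k) * (cnj (U $$ (a,k)) * U $$ (a,k)))"
    by (rule sum.swap)
  also have "\<dots> = (\<Sum>k<N. complex_of_real (g k) * (\<Sum>a<N. cnj (U $$ (a,k)) * U $$ (a,k)))"
    by (simp add: sum_distrib_left)
  also have "\<dots> = (\<Sum>k<N. complex_of_real (g k))"
    by (intro sum.cong refl) (simp add: unitary_mat_cols[OF U])
  finally show ?thesis by simp
qed

lemma mtrace_eq_sum_quad_form:
  assumes U: "unitary_mat N U" and Y: "Y \<in> carrier_mat N N"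
  shows "mtrace Y = (\<Sum>k<N. quad_form N Y (\<lambda>b. U $$ (b,k)))"
proof -
  have "(\<Sum>k<N. quad_form N Y (\<lambda>b. U $$ (b,k))) = (\<Sum>k<N. \<Sum>a<N. \<Sum>b<N. Y $$ (a,b) * (U $$ (b,k) * cnj (U $$ (a,k))))"
    unfolding quad_form_def by (intro sum.cong refl) (simp add: mult_ac)
  also have "\<dots> = (\<Sum>a<N. \<Sum>b<N. \<Sum>k<N. Y $$ (a,b) * (U $$ (b,k) * cnj (U $$ (a,k))))"
    by (rule sum_swap3[symmetric])
  also have "\<dots> = (\<Sum>a<N. \<Sum>b<N. Y $$ (a,b) * (\<Sum>k<N. U $$ (b,k) * cnj (U $$ (a,k))))"
    by (simp add: sum_distrib_left)
  also have "\<dots> = (\<Sum>a<N. \<Sum>b<N. if b = a then Y $$ (a,a) else 0)"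
    by (intro sum.cong refl) (auto simp: unitary_mat_rows[OF U])
  also have "\<dots> = mtrace Y" unfolding mtrace_carrier_mat[OF Y] by simp
  finally show ?thesis ..
qed

lemma quad_form_vec:
  assumes Y: "Y \<in> carrier_mat N N" and v: "v \<in> carrier_vec N"
  shows "(Y *\<^sub>v v) \<bullet>c v = quad_form N Y (\<lambda>i. v $ i)"
proof -
  have "(Y *\<^sub>v v) \<bullet>c v = (\<Sum>a<N. (\<Sum>b<N. Y $$ (a,b) * v $ b) * cnj (v $ a))"
    using Y v by (simp add: scalar_prod_def atLeast0LessThan carrier_matD)
  also have "\<dots> = quad_form N Y (\<lambda>i. v $ i)"
    unfolding quad_form_def sum_distrib_right by (intro sum.cong refl) (simp add: mult_ac)
  finally show ?thesis .
qed

lemma psd_mat_quad_form: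
  assumes "psd_mat N Y"
  shows "Re (quad_form N Y u) \<ge> 0" "Im (quad_form N Y u) = 0"
proof -
  have Y: "Y \<in> carrier_mat N N" using assms unfolding psd_mat_def hermitian_mat_def by auto
  define v where "v = vec N u"
  have v: "v \<in> carrier_vec N" unfolding v_def by simp
  have "quad_form N Y u = quad_form N Y (\<lambda>i. v $ i)" unfolding quad_form_def v_def by (intro sum.cong refl) simp
  also have "\<dots> = (Y *\<^sub>v v) \<bullet>c v" using quad_form_vec[OF Y v] by simp
  finally have e: "quad_form N Y u = (Y *\<^sub>v v) \<bullet>c v" .
  show "Re (quad_form N Y u) \<ge> 0" "Im (quad_form N Y u) = 0" unfolding e using assms v unfolding psd_mat_def by auto
qed

lemma psd_matI_quad_form:
  assumes "hermitian_mat N Y" and "\<And>u. Re (quad_form N Y u) \<ge> 0 \<and> Im (quad_form N Y u) = 0"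
  shows "psd_mat N Y"
proof -
  have Y: "Y \<in> carrier_mat N N" using assms unfolding hermitian_mat_def by auto
  { fix v :: "complex vec" assume v: "v \<in> carrier_vec N"
    have "Re ((Y *\<^sub>v v) \<bullet>c v) \<ge> 0 \<and> Im ((Y *\<^sub>v v) \<bullet>c v) = 0" unfolding quad_form_vec[OF Y v] using assms(2) by simp }
  thus ?thesis using assms(1) unfolding psd_mat_def by auto
qed

lemma index_minus_mat_square: "A \<in> carrier_mat N N \<Longrightarrow> B \<in> carrier_mat N N \<Longrightarrow> a < N \<Longrightarrow> b < N \<Longrightarrow> (A - B) $$ (a,b) = A $$ (a,b) - B $$ (a,b)"
  by (simp add: carrier_matD)

lemma hermitian_mat_diff:
  assumes "hermitian_mat N A" "hermitian_mat N B"
  shows "hermitian_mat N (A - B)"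
proof -
  have A: "A \<in> carrier_mat N N" and B: "B \<in> carrier_mat N N" and Ah: "mat_adjoint A = A" and Bh: "mat_adjoint B = B"
    using assms unfolding hermitian_mat_def by auto
  have AB: "A - B \<in> carrier_mat N N" using B by (rule minus_carrier_mat)
  have "mat_adjoint (A - B) = A - B"
  proof (rule eq_matI)
    fix i j assume "i < dim_row (A - B)" "j < dim_col (A - B)"
    hence i: "i < N" and j: "j < N" using A B by auto
    have "mat_adjoint (A - B) $$ (i,j) = cnj ((A - B) $$ (j,i))" using i j A B by (simp add: carrier_matD)
    also have "\<dots> = cnj (A $$ (j,i)) - cnj (B $$ (j,i))" using index_minus_mat_square[OF A B j i] by simp
    also have "cnj (A $$ (j,i)) = mat_adjoint A $$ (i,j)" using i j A by (simp add: carrier_matD)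
    also have "cnj (B $$ (j,i)) = mat_adjoint B $$ (i,j)" using i j B by (simp add: carrier_matD)
    finally show "mat_adjoint (A - B) $$ (i,j) = (A - B) $$ (i,j)" using Ah Bh index_minus_mat_square[OF A B i j] by simp
  qed (use A B in auto)
  thus ?thesis using AB unfolding hermitian_mat_def by simp
qed

lemma mtrace_minus: assumes A: "A \<in> carrier_mat N N" and B: "B \<in> carrier_mat N N"
  shows "mtrace (A - B) = mtrace A - mtrace B"
proof -
  have "mtrace (A - B) = (\<Sum>a<N. (A - B) $$ (a,a))" by (rule mtrace_carrier_mat[OF minus_carrier_mat[OF B]])
  also have "\<dots> = (\<Sum>a<N. A $$ (a,a) - B $$ (a,a))" by (intro sum.cong refl) (simp add: index_minus_mat_square[OF A B])
  also have "\<dots> = mtrace A - mtrace B" by (simp add: sum_subtractf mtrace_carrier_mat[OF A] mtrace_carrier_mat[OF B])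
  finally show ?thesis .
qed

lemma mtrace_plus: assumes A: "A \<in> carrier_mat N N" and B: "B \<in> carrier_mat N N"
  shows "mtrace (A + B) = mtrace A + mtrace B"
proof -
  have "mtrace (A + B) = (\<Sum>a<N. (A + B) $$ (a,a))" by (rule mtrace_carrier_mat[OF add_carrier_mat[OF B]])
  also have "\<dots> = (\<Sum>a<N. A $$ (a,a) + B $$ (a,a))" using B by (intro sum.cong refl) (simp add: carrier_matD)
  also have "\<dots> = mtrace A + mtrace B" by (simp add: sum.distrib mtrace_carrier_mat[OF A] mtrace_carrier_mat[OF B])
  finally show ?thesis .
qed

lemma mtrace_smult: assumes A: "A \<in> carrier_mat N N" shows "mtrace (c \<cdot>\<^sub>m A) = c * mtrace A"
proof -
  have "mtrace (c \<cdot>\<^sub>m A) = (\<Sum>a<N. (c \<cdot>\<^sub>m A) $$ (a,a))" by (rule mtrace_carrier_mat[OF smult_carrier_mat[OF A]])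
  also have "\<dots> = (\<Sum>a<N. c * A $$ (a,a))" using A by (intro sum.cong refl) (simp add: carrier_matD)
  also have "\<dots> = c * mtrace A" by (simp add: sum_distrib_left mtrace_carrier_mat[OF A])
  finally show ?thesis .
qed

lemma quad_form_minus: "A \<in> carrier_mat N N \<Longrightarrow> B \<in> carrier_mat N N \<Longrightarrow> quad_form N (A - B) u = quad_form N A u - quad_form N B u"
  unfolding quad_form_def by (simp add: index_minus_mat_square sum_subtractf algebra_simps)

lemma quad_form_zero: "quad_form N (0\<^sub>m N N) u = 0"
  unfolding quad_form_def by simp

lemma quad_form_smult_one: "quad_form N (c \<cdot>\<^sub>m 1\<^sub>m N) u = c * complex_of_real (norm_sq N u)"
proof -
  have "quad_form N (c \<cdot>\<^sub>m 1\<^sub>m N) u = (\<Sum>a<N. \<Sum>b<N. if a = b then c * (cnj (u a) * u a) else 0)"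
    unfolding quad_form_def by (intro sum.cong refl) auto
  also have "\<dots> = c * complex_of_real (norm_sq N u)"
    unfolding norm_sq_def by (simp add: cnj_mult_self sum_distrib_left)
  finally show ?thesis .
qed

lemma mat_abs_spectral:
  assumes "hermitian_mat N X"
  obtains U l where "unitary_mat N U" "X = U * real_diag_mat N l * mat_adjoint U"
    "mat_abs N X = U * real_diag_mat N (abs \<circ> l) * mat_adjoint U"
  using mat_fun_spectral[OF assms, of abs] unfolding mat_abs_def by blast

lemma mat_abs_carrier: "hermitian_mat N X \<Longrightarrow> mat_abs N X \<in> carrier_mat N N"
  by (metis mat_abs_spectral spectral_form_carrier unitary_mat_carrier)

lemma hermitian_mat_carrier: "hermitian_mat N X \<Longrightarrow> X \<in> carrier_mat N N"
  unfolding hermitian_mat_def by simp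

lemma psd_mat_hermitian: "psd_mat N X \<Longrightarrow> hermitian_mat N X"
  unfolding psd_mat_def by simp

lemma mtrace_abs_diff_le:
  assumes A: "psd_mat N A" and B: "psd_mat N B"
  shows "Re (mtrace (mat_abs N (A - B))) \<le> Re (mtrace A) + Re (mtrace B)"
proof -
  have Ac: "A \<in> carrier_mat N N" and Bc: "B \<in> carrier_mat N N" using A B psd_mat_hermitian hermitian_mat_carrier by blast+
  have H: "hermitian_mat N (A - B)" by (rule hermitian_mat_diff[OF psd_mat_hermitian[OF A] psd_mat_hermitian[OF B]])
  obtain U l where U: "unitary_mat N U" and X: "A - B = U * real_diag_mat N l * mat_adjoint U"
    and Xa: "mat_abs N (A - B) = U * real_diag_mat N (abs \<circ> l) * mat_adjoint U" using mat_abs_spectral[OF H] by blast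
  have lk: "l k = Re (quad_form N A (\<lambda>b. U $$ (b,k))) - Re (quad_form N B (\<lambda>b. U $$ (b,k)))" if k: "k < N" for k
  proof -
    have "complex_of_real (l k) = quad_form N (A - B) (\<lambda>b. U $$ (b,k))" unfolding X by (rule quad_form_spectral_col[OF U k, symmetric])
    also have "\<dots> = quad_form N A (\<lambda>b. U $$ (b,k)) - quad_form N B (\<lambda>b. U $$ (b,k))" by (rule quad_form_minus[OF Ac Bc])
    finally show ?thesis by (metis Re_complex_of_real minus_complex.simps(1))
  qed
  have "Re (mtrace (mat_abs N (A - B))) = (\<Sum>k<N. \<bar>l k\<bar>)" unfolding Xa mtrace_spectral_form[OF U] by simp
  also have "\<dots> \<le> (\<Sum>k<N. Re (quad_form N A (\<lambda>b. U $$ (b,k))) + Re (quad_form N B (\<lambda>b. U $$ (b,k))))"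
  proof (rule sum_mono)
    fix k assume "k \<in> {..<N}"
    thus "\<bar>l k\<bar> \<le> Re (quad_form N A (\<lambda>b. U $$ (b,k))) + Re (quad_form N B (\<lambda>b. U $$ (b,k)))"
      using lk[of k] psd_mat_quad_form(1)[OF A, of "\<lambda>b. U $$ (b,k)"] psd_mat_quad_form(1)[OF B, of "\<lambda>b. U $$ (b,k)"] by auto
  qed
  also have "\<dots> = Re (mtrace A) + Re (mtrace B)"
    unfolding mtrace_eq_sum_quad_form[OF U Ac] mtrace_eq_sum_quad_form[OF U Bc] by (simp add: sum.distrib)
  finally show ?thesis .
qed

lemma mtrace_mult_le_positive_part:
  assumes L0: "loewner_le N (0\<^sub>m N N) L" and L1: "loewner_le N L (complex_of_real p \<cdot>\<^sub>m 1\<^sub>m N)"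
    and H: "hermitian_mat N X"
  shows "Re (mtrace (L * X)) \<le> p * (Re (mtrace X) + Re (mtrace (mat_abs N X))) / 2"
proof -
  have Lc: "L \<in> carrier_mat N N" using L0 unfolding loewner_le_def hermitian_mat_def by auto
  have P0: "psd_mat N (L - 0\<^sub>m N N)" and P1: "psd_mat N (complex_of_real p \<cdot>\<^sub>m 1\<^sub>m N - L)"
    using L0 L1 unfolding loewner_le_def by auto
  obtain U l where U: "unitary_mat N U" and X: "X = U * real_diag_mat N l * mat_adjoint U"
    and Xa: "mat_abs N X = U * real_diag_mat N (abs \<circ> l) * mat_adjoint U" using mat_abs_spectral[OF H] by blast
  define r where "r k = Re (quad_form N L (\<lambda>b. U $$ (b,k)))" for k
  have r: "0 \<le> r k \<and> r k \<le> p" if k: "k < N" for k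
  proof -
    have "quad_form N (L - 0\<^sub>m N N) (\<lambda>b. U $$ (b,k)) = quad_form N L (\<lambda>b. U $$ (b,k))"
      using quad_form_minus[OF Lc zero_carrier_mat] quad_form_zero by simp
    hence a: "0 \<le> r k" using psd_mat_quad_form(1)[OF P0, of "\<lambda>b. U $$ (b,k)"] unfolding r_def by simp
    have "quad_form N (complex_of_real p \<cdot>\<^sub>m 1\<^sub>m N - L) (\<lambda>b. U $$ (b,k)) = complex_of_real p - quad_form N L (\<lambda>b. U $$ (b,k))"
      using quad_form_minus[OF smult_carrier_mat[OF one_carrier_mat] Lc] quad_form_smult_one norm_sq_unitary_col[OF U k] by simp
    hence "0 \<le> p - r k" using psd_mat_quad_form(1)[OF P1, of "\<lambda>b. U $$ (b,k)"] unfolding r_def by simp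
    thus ?thesis using a by simp
  qed
  have "Re (mtrace (L * X)) = (\<Sum>k<N. l k * r k)"
    unfolding X mtrace_mult_spectral_form[OF U Lc] r_def by simp
  also have "\<dots> \<le> (\<Sum>k<N. p * (l k + \<bar>l k\<bar>) / 2)"
  proof (rule sum_mono)
    fix k assume "k \<in> {..<N}"
    hence "0 \<le> r k" "r k \<le> p" using r by auto
    thus "l k * r k \<le> p * (l k + \<bar>l k\<bar>) / 2"
    proof (cases "l k \<ge> 0")
      case True
      thus ?thesis using \<open>r k \<le> p\<close> mult_left_mono[OF \<open>r k \<le> p\<close> True] by (simp add: mult.commute)
    next
      case False
      hence "l k * r k \<le> 0" using \<open>0 \<le> r k\<close> by (simp add: mult_nonpos_nonneg)
      thus ?thesis using False by simp
    qed
  qed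
  also have "\<dots> = p * ((\<Sum>k<N. l k) + (\<Sum>k<N. \<bar>l k\<bar>)) / 2"
    by (simp add: sum_divide_distrib[symmetric] sum_distrib_left[symmetric] sum.distrib)
  also have "\<dots> = p * (Re (mtrace X) + Re (mtrace (mat_abs N X))) / 2"
    unfolding Xa unfolding X mtrace_spectral_form[OF U] by simp
  finally show ?thesis .
qed

lemma sum_reindex_embedding:
  fixes N N' :: nat and \<psi> :: "nat \<Rightarrow> nat"
  assumes inj: "inj_on \<psi> {..<N}" and img: "\<psi> ` {..<N} \<subseteq> {..<N'}"
    and z: "\<And>a'. a' < N' \<Longrightarrow> a' \<notin> \<psi> ` {..<N} \<Longrightarrow> g a' = 0"
  shows "(\<Sum>a'<N'. g a') = (\<Sum>a<N. g (\<psi> a))"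
proof -
  have "(\<Sum>a'\<in>\<psi> ` {..<N}. g a') = (\<Sum>a'<N'. g a')"
    by (rule sum.mono_neutral_left) (use img z in auto)
  hence "(\<Sum>a'<N'. g a') = (\<Sum>a'\<in>\<psi> ` {..<N}. g a')" by simp
  also have "\<dots> = (\<Sum>a<N. g (\<psi> a))" by (rule sum.reindex[OF inj, unfolded comp_def])
  finally show ?thesis .
qed

lemma mtrace_abs_compression_le:
  assumes X: "hermitian_mat N' X" and Z: "hermitian_mat N Z"
    and inj: "inj_on \<psi> {..<N}" and img: "\<psi> ` {..<N} \<subseteq> {..<N'}"
    and XZ: "\<And>a b. a < N \<Longrightarrow> b < N \<Longrightarrow> X $$ (\<psi> a, \<psi> b) = Z $$ (a,b)"
    and X0: "\<And>a' b'. a' < N' \<Longrightarrow> b' < N' \<Longrightarrow> a' \<notin> \<psi> ` {..<N} \<or> b' \<notin> \<psi> ` {..<N} \<Longrightarrow> X $$ (a',b') = 0"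
  shows "Re (mtrace (mat_abs N' X)) \<le> Re (mtrace (mat_abs N Z))"
proof -
  obtain U l where U: "unitary_mat N' U" and Xd: "X = U * real_diag_mat N' l * mat_adjoint U"
    and Xa: "mat_abs N' X = U * real_diag_mat N' (abs \<circ> l) * mat_adjoint U" using mat_abs_spectral[OF X] by blast
  obtain V m where V: "unitary_mat N V" and Zd: "Z = V * real_diag_mat N m * mat_adjoint V"
    and Za: "mat_abs N Z = V * real_diag_mat N (abs \<circ> m) * mat_adjoint V" using mat_abs_spectral[OF Z] by blast
  have qfXZ: "quad_form N' X u = quad_form N Z (u \<circ> \<psi>)" for u
  proof -
    have "quad_form N' X u = (\<Sum>a'<N'. \<Sum>b<N. cnj (u a') * X $$ (a', \<psi> b) * u (\<psi> b))"
      unfolding quad_form_def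
    proof (rule sum.cong[OF refl])
      fix a' assume "a' \<in> {..<N'}"
      show "(\<Sum>b'<N'. cnj (u a') * X $$ (a', b') * u b') = (\<Sum>b<N. cnj (u a') * X $$ (a', \<psi> b) * u (\<psi> b))"
        by (rule sum_reindex_embedding[OF inj img]) (use X0 \<open>a' \<in> {..<N'}\<close> in auto)
    qed
    also have "\<dots> = (\<Sum>a<N. \<Sum>b<N. cnj (u (\<psi> a)) * X $$ (\<psi> a, \<psi> b) * u (\<psi> b))"
      by (rule sum_reindex_embedding[OF inj img]) (use X0 img in \<open>auto intro!: sum.neutral\<close>)
    also have "\<dots> = quad_form N Z (u \<circ> \<psi>)" unfolding quad_form_def by (intro sum.cong refl) (simp add: XZ)
    finally show ?thesis .
  qed
  define c where "c j k = (cmod (cinner N (\<lambda>b. V $$ (b,j)) ((\<lambda>b. U $$ (b,k)) \<circ> \<psi>)))^2" for j k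
  have lk: "l k = (\<Sum>j<N. m j * c j k)" if k: "k < N'" for k
  proof -
    have "complex_of_real (l k) = quad_form N' X (\<lambda>b. U $$ (b,k))" unfolding Xd by (rule quad_form_spectral_col[OF U k, symmetric])
    also have "\<dots> = quad_form N Z ((\<lambda>b. U $$ (b,k)) \<circ> \<psi>)" by (rule qfXZ)
    also have "\<dots> = complex_of_real (\<Sum>j<N. m j * c j k)" unfolding Zd quad_form_spectral[OF V] c_def by simp
    finally show ?thesis by (metis of_real_eq_iff)
  qed
  have csum: "(\<Sum>k<N'. c j k) = 1" if j: "j < N" for j
  proof -
    define vt where "vt b' = (if b' \<in> \<psi> ` {..<N} then V $$ (inv_into {..<N} \<psi> b', j) else 0)" for b'
    have vtpsi: "vt (\<psi> b) = V $$ (b,j)" if "b < N" for b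
      unfolding vt_def using that inj by (simp add: inv_into_f_f)
    have ipk: "cinner N (\<lambda>b. V $$ (b,j)) ((\<lambda>b. U $$ (b,k)) \<circ> \<psi>) = cnj (cinner N' (\<lambda>b. U $$ (b,k)) vt)" for k
    proof -
      have "cinner N' (\<lambda>b. U $$ (b,k)) vt = (\<Sum>b<N. cnj (U $$ (\<psi> b, k)) * vt (\<psi> b))"
        unfolding cinner_def by (rule sum_reindex_embedding[OF inj img]) (simp add: vt_def)
      also have "\<dots> = (\<Sum>b<N. cnj (U $$ (\<psi> b, k)) * V $$ (b,j))" by (intro sum.cong refl) (simp add: vtpsi)
      finally show ?thesis unfolding cinner_def by (simp add: mult.commute)
    qed
    have "(\<Sum>k<N'. c j k) = (\<Sum>k<N'. (cmod (cinner N' (\<lambda>b. U $$ (b,k)) vt))^2)"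
      unfolding c_def ipk by simp
    also have "\<dots> = norm_sq N' vt" by (rule cinner_unitary_parseval[OF U])
    also have "\<dots> = (\<Sum>b<N. (cmod (vt (\<psi> b)))^2)" unfolding norm_sq_def
      by (rule sum_reindex_embedding[OF inj img]) (simp add: vt_def)
    also have "\<dots> = norm_sq N (\<lambda>b. V $$ (b,j))" unfolding norm_sq_def by (intro sum.cong refl) (simp add: vtpsi)
    also have "\<dots> = 1" by (rule norm_sq_unitary_col[OF V j])
    finally show ?thesis .
  qed
  have "Re (mtrace (mat_abs N' X)) = (\<Sum>k<N'. \<bar>l k\<bar>)" unfolding Xa mtrace_spectral_form[OF U] by simp
  also have "\<dots> \<le> (\<Sum>k<N'. \<Sum>j<N. \<bar>m j\<bar> * c j k)"
  proof (rule sum_mono)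
    fix k assume "k \<in> {..<N'}"
    hence "\<bar>l k\<bar> = \<bar>\<Sum>j<N. m j * c j k\<bar>" using lk by simp
    also have "\<dots> \<le> (\<Sum>j<N. \<bar>m j * c j k\<bar>)" by (rule sum_abs)
    also have "\<dots> = (\<Sum>j<N. \<bar>m j\<bar> * c j k)" by (simp add: abs_mult c_def)
    finally show "\<bar>l k\<bar> \<le> (\<Sum>j<N. \<bar>m j\<bar> * c j k)" .
  qed
  also have "\<dots> = (\<Sum>j<N. \<bar>m j\<bar> * (\<Sum>k<N'. c j k))" by (simp add: sum_distrib_left sum.swap[of _ "{..<N'}"])
  also have "\<dots> = (\<Sum>j<N. \<bar>m j\<bar>)" by (simp add: csum)
  also have "\<dots> = Re (mtrace (mat_abs N Z))" unfolding Za mtrace_spectral_form[OF V] by simp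
  finally show ?thesis .
qed

lemma psd_matI_gram:
  fixes w :: "'k \<Rightarrow> nat \<Rightarrow> complex"
  assumes X: "X \<in> carrier_mat N N" and K: "finite K" and c: "\<And>k. k \<in> K \<Longrightarrow> c k \<ge> 0"
    and e: "\<And>a b. a < N \<Longrightarrow> b < N \<Longrightarrow> X $$ (a,b) = (\<Sum>k\<in>K. complex_of_real (c k) * w k a * cnj (w k b))"
  shows "psd_mat N X"
proof (rule psd_matI_quad_form)
  show "hermitian_mat N X" unfolding hermitian_mat_def
  proof
    show "X \<in> carrier_mat N N" by fact
    show "mat_adjoint X = X"
    proof (rule eq_matI)
      fix a b assume "a < dim_row X" "b < dim_col X"
      hence a: "a < N" and b: "b < N" using X by auto
      have "mat_adjoint X $$ (a,b) = cnj (X $$ (b,a))" using a b X by (simp add: carrier_matD)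
      also have "\<dots> = X $$ (a,b)" unfolding e[OF a b] e[OF b a] by (simp add: mult_ac)
      finally show "mat_adjoint X $$ (a,b) = X $$ (a,b)" .
    qed (use X in auto)
  qed
  fix u
  have "quad_form N X u = (\<Sum>a<N. \<Sum>b<N. \<Sum>k\<in>K. complex_of_real (c k) * ((w k a * cnj (u a)) * (cnj (w k b) * u b)))"
    unfolding quad_form_def by (intro sum.cong refl) (simp add: e sum_distrib_left sum_distrib_right mult_ac)
  also have "\<dots> = (\<Sum>k\<in>K. \<Sum>a<N. \<Sum>b<N. complex_of_real (c k) * ((w k a * cnj (u a)) * (cnj (w k b) * u b)))"
    by (rule sum_swap3)
  also have "\<dots> = (\<Sum>k\<in>K. complex_of_real (c k * (cmod (cinner N (w k) u))^2))"
  proof (rule sum.cong[OF refl])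
    fix k assume "k \<in> K"
    have "(\<Sum>a<N. \<Sum>b<N. complex_of_real (c k) * ((w k a * cnj (u a)) * (cnj (w k b) * u b))) =
       complex_of_real (c k) * (\<Sum>a<N. \<Sum>b<N. (w k a * cnj (u a)) * (cnj (w k b) * u b))"
      by (simp add: sum_distrib_left)
    also have "(\<Sum>a<N. \<Sum>b<N. (w k a * cnj (u a)) * (cnj (w k b) * u b)) = cnj (cinner N (w k) u) * cinner N (w k) u"
      by (rule cnj_cinner_mult[symmetric])
    also have "\<dots> = complex_of_real ((cmod (cinner N (w k) u))^2)" by (rule cnj_mult_self)
    finally show "(\<Sum>a<N. \<Sum>b<N. complex_of_real (c k) * ((w k a * cnj (u a)) * (cnj (w k b) * u b))) =
       complex_of_real (c k * (cmod (cinner N (w k) u))^2)" by simp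
  qed
  also have "\<dots> = complex_of_real (\<Sum>k\<in>K. c k * (cmod (cinner N (w k) u))^2)" by simp
  finally have q: "quad_form N X u = complex_of_real (\<Sum>k\<in>K. c k * (cmod (cinner N (w k) u))^2)" .
  have "(\<Sum>k\<in>K. c k * (cmod (cinner N (w k) u))^2) \<ge> 0" by (rule sum_nonneg) (simp add: c)
  thus "Re (quad_form N X u) \<ge> 0 \<and> Im (quad_form N X u) = 0" unfolding q by simp
qed

lemma psd_mat_gram:
  assumes "psd_mat N A"
  shows "\<exists>U \<alpha>. (\<forall>k<N. \<alpha> k \<ge> (0::real)) \<and>
    (\<forall>a<N. \<forall>b<N. A $$ (a,b) = (\<Sum>k<N. complex_of_real (\<alpha> k) * U $$ (a,k) * cnj (U $$ (b,k))))"
proof -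
  have H: "hermitian_mat N A" using assms by (rule psd_mat_hermitian)
  obtain U l where U: "unitary_mat N U" and Ad: "A = U * real_diag_mat N l * mat_adjoint U"
    using mat_abs_spectral[OF H] by blast
  have Uc: "U \<in> carrier_mat N N" using U by (rule unitary_mat_carrier)
  have "l k \<ge> 0" if k: "k < N" for k
    using psd_mat_quad_form(1)[OF assms, of "\<lambda>b. U $$ (b,k)"] unfolding Ad quad_form_spectral_col[OF U k] by simp
  moreover have "A $$ (a,b) = (\<Sum>k<N. complex_of_real (l k) * U $$ (a,k) * cnj (U $$ (b,k)))" if "a < N" "b < N" for a b
    unfolding Ad index_spectral_form[OF Uc that] by (simp add: mult_ac)
  ultimately show ?thesis by blast
qed

lemma mtrace_mat_wedge:
  assumes A: "A \<in> carrier_mat N N" and B: "B \<in> carrier_mat N N" and H: "hermitian_mat N (A - B)"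
  shows "Re (mtrace (mat_wedge N A B)) = (Re (mtrace A) + Re (mtrace B) - Re (mtrace (mat_abs N (A - B)))) / 2"
proof -
  have Ab: "mat_abs N (A - B) \<in> carrier_mat N N" by (rule mat_abs_carrier[OF H])
  have AB: "A + B \<in> carrier_mat N N" using B by (rule add_carrier_mat)
  have "mtrace (mat_wedge N A B) = (1/2) * mtrace (A + B - mat_abs N (A - B))"
    unfolding mat_wedge_def by (rule mtrace_smult[OF minus_carrier_mat[OF Ab]])
  also have "mtrace (A + B - mat_abs N (A - B)) = mtrace (A + B) - mtrace (mat_abs N (A - B))"
    by (rule mtrace_minus[OF AB Ab])
  also have "mtrace (A + B) = mtrace A + mtrace B" by (rule mtrace_plus[OF A B])
  finally have "mtrace (mat_wedge N A B) = (1/2) * (mtrace A + mtrace B - mtrace (mat_abs N (A - B)))" .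
  hence "Re (mtrace (mat_wedge N A B)) = Re ((1/2) * (mtrace A + mtrace B - mtrace (mat_abs N (A - B))))" by (rule arg_cong)
  also have "\<dots> = (Re (mtrace A) + Re (mtrace B) - Re (mtrace (mat_abs N (A - B)))) / 2" by simp
  finally show ?thesis .
qed

lemma mtrace_sum_mult_partition:
  assumes sum1: "mat D D (\<lambda>ij. \<Sum>x\<in>A. \<Lambda> x $$ ij) = 1\<^sub>m D"
    and Lc: "\<And>x. x \<in> A \<Longrightarrow> \<Lambda> x \<in> carrier_mat D D" and B: "B \<in> carrier_mat D D"
  shows "(\<Sum>x\<in>A. mtrace (\<Lambda> x * B)) = mtrace B"
proof -
  have L: "(\<Sum>x\<in>A. \<Lambda> x $$ (a,b)) = (if a = b then 1 else 0)" if "a < D" "b < D" for a b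
  proof -
    have "mat D D (\<lambda>ij. \<Sum>x\<in>A. \<Lambda> x $$ ij) $$ (a,b) = 1\<^sub>m D $$ (a,b)" using sum1 by simp
    thus ?thesis using that by simp
  qed
  have "(\<Sum>x\<in>A. mtrace (\<Lambda> x * B)) = (\<Sum>x\<in>A. \<Sum>a<D. \<Sum>b<D. \<Lambda> x $$ (a,b) * B $$ (b,a))"
  proof (rule sum.cong[OF refl])
    fix x assume x: "x \<in> A"
    show "mtrace (\<Lambda> x * B) = (\<Sum>a<D. \<Sum>b<D. \<Lambda> x $$ (a,b) * B $$ (b,a))"
      unfolding mtrace_carrier_mat[OF mult_carrier_mat[OF Lc[OF x] B]]
      by (rule sum.cong[OF refl]) (simp add: index_mult_mat_sum[OF Lc[OF x] B])
  qed
  also have "\<dots> = (\<Sum>a<D. \<Sum>b<D. \<Sum>x\<in>A. \<Lambda> x $$ (a,b) * B $$ (b,a))" by (rule sum_swap3[symmetric])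
  also have "\<dots> = (\<Sum>a<D. \<Sum>b<D. (\<Sum>x\<in>A. \<Lambda> x $$ (a,b)) * B $$ (b,a))" by (simp add: sum_distrib_right)
  also have "\<dots> = (\<Sum>a<D. \<Sum>b<D. if a = b then B $$ (a,a) else 0)"
    by (intro sum.cong refl) (simp add: L)
  also have "\<dots> = mtrace B" unfolding mtrace_carrier_mat[OF B] by simp
  finally show ?thesis .
qed

lemma psd_mat_smult:
  assumes c: "c \<ge> 0" and X: "psd_mat N X"
  shows "psd_mat N (complex_of_real c \<cdot>\<^sub>m X)"
proof -
  have Xc: "X \<in> carrier_mat N N" using X psd_mat_hermitian hermitian_mat_carrier by blast
  from psd_mat_gram[OF X] obtain U \<alpha> where al: "\<forall>k<N. \<alpha> k \<ge> 0"
    and Xe: "\<forall>a<N. \<forall>b<N. X $$ (a,b) = (\<Sum>k<N. complex_of_real (\<alpha> k) * U $$ (a,k) * cnj (U $$ (b,k)))"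
    by blast
  show ?thesis
  proof (rule psd_matI_gram[where K="{..<N}" and c="\<lambda>k. c * \<alpha> k" and w="\<lambda>k a. U $$ (a,k)"])
    show "complex_of_real c \<cdot>\<^sub>m X \<in> carrier_mat N N" using Xc by simp
    show "finite {..<N}" by simp
    show "\<And>k. k \<in> {..<N} \<Longrightarrow> 0 \<le> c * \<alpha> k" using al c by simp
    fix a b assume a: "a < N" and b: "b < N"
    have "(complex_of_real c \<cdot>\<^sub>m X) $$ (a,b) = complex_of_real c * X $$ (a,b)" using Xc a b by (simp add: carrier_matD)
    also have "\<dots> = (\<Sum>k<N. complex_of_real (c * \<alpha> k) * U $$ (a,k) * cnj (U $$ (b,k)))"
      using Xe a b by (simp add: sum_distrib_left mult_ac)
    finally show "(complex_of_real c \<cdot>\<^sub>m X) $$ (a,b) = (\<Sum>k<N. complex_of_real (c * \<alpha> k) * U $$ (a,k) * cnj (U $$ (b,k)))" .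
  qed
qed

lemma psd_mat_one: "psd_mat D (1\<^sub>m D)"
  by (rule psd_matI_gram[where K="{..<D}" and c="\<lambda>_. 1" and w="\<lambda>k a. if a = k then 1 else 0"])
     (auto simp: if_distrib cong: if_cong)

lemma psd_mat_smult_one: "0 \<le> c \<Longrightarrow> psd_mat D (complex_of_real c \<cdot>\<^sub>m 1\<^sub>m D)"
  by (rule psd_mat_smult[OF _ psd_mat_one])

lemma smult_one_minus: "complex_of_real a \<cdot>\<^sub>m 1\<^sub>m D - complex_of_real b \<cdot>\<^sub>m 1\<^sub>m D = complex_of_real (a - b) \<cdot>\<^sub>m 1\<^sub>m D"
  by (rule eq_matI) (auto simp: algebra_simps)

lemma minus_zero_mat_right: "(X::complex mat) \<in> carrier_mat D D \<Longrightarrow> X - 0\<^sub>m D D = X"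
  by (rule eq_matI) (simp_all add: carrier_matD)

lemma hermitian_mat_zero: "hermitian_mat D (0\<^sub>m D D :: complex mat)"
  unfolding hermitian_mat_def by (auto intro!: eq_matI)

lemma sum_lessThan_mult_split:
  fixes n1 n2 :: nat
  shows "(\<Sum>i<n1*n2. f i) = (\<Sum>a<n1. \<Sum>b<n2. f (a*n2 + b))"
proof -
  have "(\<Sum>i<n1*n2. f i) = (\<Sum>a<n1. sum f {a*n2..<a*n2+n2})" by (rule sum.nat_group[symmetric])
  also have "\<dots> = (\<Sum>a<n1. \<Sum>b<n2. f (a*n2 + b))"
  proof (rule sum.cong[OF refl])
    fix a
    have "sum f {0 + a*n2..<n2 + a*n2} = (\<Sum>b\<in>{0..<n2}. f (b + a*n2))" by (rule sum.shift_bounds_nat_ivl)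
    thus "sum f {a*n2..<a*n2+n2} = (\<Sum>b<n2. f (a*n2 + b))" by (simp add: atLeast0LessThan add.commute)
  qed
  finally show ?thesis .
qed


lemma dim_kron[simp]: "dim_row (kron A B) = dim_row A * dim_row B" "dim_col (kron A B) = dim_col A * dim_col B"
  unfolding kron_def by simp_all

lemma kron_carrier: "A \<in> carrier_mat n1 n1 \<Longrightarrow> B \<in> carrier_mat n2 n2 \<Longrightarrow> kron A B \<in> carrier_mat (n1*n2) (n1*n2)"
  by (rule carrier_matI) (simp_all add: carrier_matD)

lemma index_kron:
  assumes A: "A \<in> carrier_mat n1 n1" and B: "B \<in> carrier_mat n2 n2" and a: "a < n1*n2" and b: "b < n1*n2"
  shows "kron A B $$ (a,b) = A $$ (a div n2, b div n2) * B $$ (a mod n2, b mod n2)"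
  unfolding kron_def using A B a b by (simp add: carrier_matD)

lemma div_mod_less_mult: "a < n1 * (n2::nat) \<Longrightarrow> a div n2 < n1 \<and> a mod n2 < n2"
  by (metis less_mult_imp_div_less mod_less_divisor mult_0_right not_gr_zero not_less_zero)

lemma psd_mat_kron:
  assumes A: "psd_mat n1 A" and B: "psd_mat n2 B"
  shows "psd_mat (n1*n2) (kron A B)"
proof -
  have Ac: "A \<in> carrier_mat n1 n1" and Bc: "B \<in> carrier_mat n2 n2" using A B psd_mat_hermitian hermitian_mat_carrier by blast+
  from psd_mat_gram[OF A] obtain U \<alpha> where al0: "\<forall>k<n1. \<alpha> k \<ge> 0"
    and Ae0: "\<forall>a<n1. \<forall>b<n1. A $$ (a,b) = (\<Sum>k<n1. complex_of_real (\<alpha> k) * U $$ (a,k) * cnj (U $$ (b,k)))"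
    by blast
  have al: "\<And>k. k < n1 \<Longrightarrow> \<alpha> k \<ge> 0" using al0 by blast
  have Ae: "\<And>a b. a < n1 \<Longrightarrow> b < n1 \<Longrightarrow> A $$ (a,b) = (\<Sum>k<n1. complex_of_real (\<alpha> k) * U $$ (a,k) * cnj (U $$ (b,k)))"
    using Ae0 by blast
  from psd_mat_gram[OF B] obtain V \<beta> where be0: "\<forall>k<n2. \<beta> k \<ge> 0"
    and Be0: "\<forall>a<n2. \<forall>b<n2. B $$ (a,b) = (\<Sum>k<n2. complex_of_real (\<beta> k) * V $$ (a,k) * cnj (V $$ (b,k)))"
    by blast
  have be: "\<And>k. k < n2 \<Longrightarrow> \<beta> k \<ge> 0" using be0 by blast
  have Be: "\<And>a b. a < n2 \<Longrightarrow> b < n2 \<Longrightarrow> B $$ (a,b) = (\<Sum>k<n2. complex_of_real (\<beta> k) * V $$ (a,k) * cnj (V $$ (b,k)))"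
    using Be0 by blast
  show ?thesis
  proof (rule psd_matI_gram[where K="{..<n1} \<times> {..<n2}" and c="\<lambda>(k1,k2). \<alpha> k1 * \<beta> k2"
        and w="\<lambda>(k1,k2) a. U $$ (a div n2, k1) * V $$ (a mod n2, k2)"])
    show "kron A B \<in> carrier_mat (n1*n2) (n1*n2)" by (rule kron_carrier[OF Ac Bc])
    show "finite ({..<n1} \<times> {..<n2})" by simp
    show "\<And>k. k \<in> {..<n1} \<times> {..<n2} \<Longrightarrow> 0 \<le> (case k of (k1, k2) \<Rightarrow> \<alpha> k1 * \<beta> k2)"
      using al be by auto
    fix a b assume a: "a < n1*n2" and b: "b < n1*n2"
    note ab = div_mod_less_mult[OF a] div_mod_less_mult[OF b]
    have "kron A B $$ (a,b) = A $$ (a div n2, b div n2) * B $$ (a mod n2, b mod n2)" by (rule index_kron[OF Ac Bc a b])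
    also have "\<dots> = (\<Sum>k1<n1. complex_of_real (\<alpha> k1) * U $$ (a div n2,k1) * cnj (U $$ (b div n2,k1))) *
        (\<Sum>k2<n2. complex_of_real (\<beta> k2) * V $$ (a mod n2,k2) * cnj (V $$ (b mod n2,k2)))"
      using ab by (simp add: Ae Be)
    also have "\<dots> = (\<Sum>k1<n1. \<Sum>k2<n2. (complex_of_real (\<alpha> k1) * U $$ (a div n2,k1) * cnj (U $$ (b div n2,k1))) *
        (complex_of_real (\<beta> k2) * V $$ (a mod n2,k2) * cnj (V $$ (b mod n2,k2))))"
      by (rule sum_product)
    also have "\<dots> = (\<Sum>(k1,k2)\<in>{..<n1} \<times> {..<n2}. (complex_of_real (\<alpha> k1) * U $$ (a div n2,k1) * cnj (U $$ (b div n2,k1))) *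
        (complex_of_real (\<beta> k2) * V $$ (a mod n2,k2) * cnj (V $$ (b mod n2,k2))))"
      by (rule sum.cartesian_product)
    also have "\<dots> = (\<Sum>k\<in>{..<n1} \<times> {..<n2}. complex_of_real (case k of (k1, k2) \<Rightarrow> \<alpha> k1 * \<beta> k2) *
          (case k of (k1, k2) \<Rightarrow> \<lambda>a. U $$ (a div n2, k1) * V $$ (a mod n2, k2)) a *
          cnj ((case k of (k1, k2) \<Rightarrow> \<lambda>a. U $$ (a div n2, k1) * V $$ (a mod n2, k2)) b))"
      by (intro sum.cong refl) (auto simp: mult_ac)
    finally show "kron A B $$ (a,b) = (\<Sum>k\<in>{..<n1} \<times> {..<n2}. complex_of_real (case k of (k1, k2) \<Rightarrow> \<alpha> k1 * \<beta> k2) *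
          (case k of (k1, k2) \<Rightarrow> \<lambda>a. U $$ (a div n2, k1) * V $$ (a mod n2, k2)) a *
          cnj ((case k of (k1, k2) \<Rightarrow> \<lambda>a. U $$ (a div n2, k1) * V $$ (a mod n2, k2)) b))" .
  qed
qed

lemma mtrace_kron:
  assumes A: "A \<in> carrier_mat n1 n1" and B: "B \<in> carrier_mat n2 n2"
  shows "mtrace (kron A B) = mtrace A * mtrace B"
proof -
  have "mtrace (kron A B) = (\<Sum>i<n1*n2. kron A B $$ (i,i))" by (rule mtrace_carrier_mat[OF kron_carrier[OF A B]])
  also have "\<dots> = (\<Sum>a<n1. \<Sum>b<n2. kron A B $$ (a*n2+b, a*n2+b))" by (rule sum_lessThan_mult_split)
  also have "\<dots> = (\<Sum>a<n1. \<Sum>b<n2. A $$ (a,a) * B $$ (b,b))"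
  proof (intro sum.cong refl)
    fix a b assume a: "a \<in> {..<n1}" and b: "b \<in> {..<n2}"
    have lt: "a*n2+b < n1*n2" using a b
      by (metis lessThan_iff add.commute add_less_cancel_left less_le_trans mult.commute mult_le_mono1 not_less_eq_eq Suc_leI mult_Suc_right)
    show "kron A B $$ (a*n2+b, a*n2+b) = A $$ (a,a) * B $$ (b,b)"
      unfolding index_kron[OF A B lt lt] using b by simp
  qed
  also have "\<dots> = mtrace A * mtrace B" by (simp add: sum_product mtrace_carrier_mat[OF A] mtrace_carrier_mat[OF B])
  finally show ?thesis .
qed

lemma kron_list_carrier: "(\<And>F. F \<in> set Fs \<Longrightarrow> F \<in> carrier_mat d d) \<Longrightarrow> kron_list Fs \<in> carrier_mat (d ^ length Fs) (d ^ length Fs)"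
proof (induction Fs)
  case Nil
  then show ?case by simp
next
  case (Cons F Fs)
  have "kron F (kron_list Fs) \<in> carrier_mat (d * d ^ length Fs) (d * d ^ length Fs)"
    by (rule kron_carrier) (use Cons in auto)
  thus ?case by simp
qed

lemma one1_psd: "psd_mat 1 (1\<^sub>m 1)"
  by (rule psd_matI_gram[where K="{0::nat}" and c="\<lambda>_. 1" and w="\<lambda>_ _. 1"]) auto

lemma psd_mat_kron_list: "(\<And>F. F \<in> set Fs \<Longrightarrow> psd_mat d F) \<Longrightarrow> psd_mat (d ^ length Fs) (kron_list Fs)"
proof (induction Fs)
  case Nil
  then show ?case using one1_psd by simp
next
  case (Cons F Fs)
  have "psd_mat (d * d ^ length Fs) (kron F (kron_list Fs))"
    by (rule psd_mat_kron) (use Cons in auto)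
  thus ?case by simp
qed

lemma mtrace_kron_list: "(\<And>F. F \<in> set Fs \<Longrightarrow> F \<in> carrier_mat d d \<and> mtrace F = 1) \<Longrightarrow> mtrace (kron_list Fs) = 1"
proof (induction Fs)
  case Nil
  then show ?case by (simp add: mtrace_def)
next
  case (Cons F Fs)
  have F: "F \<in> carrier_mat d d" "mtrace F = 1" using Cons.prems by auto
  have K: "kron_list Fs \<in> carrier_mat (d ^ length Fs) (d ^ length Fs)"
    by (rule kron_list_carrier) (use Cons.prems in auto)
  have "mtrace (kron F (kron_list Fs)) = mtrace F * mtrace (kron_list Fs)" by (rule mtrace_kron[OF F(1) K])
  thus ?case using F Cons by simp
qed

lemma ket_bra2_carrier: "ket_bra2 i \<in> carrier_mat 2 2"
  unfolding ket_bra2_def by simp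

lemma index_ket_bra2: "j < 2 \<Longrightarrow> k < 2 \<Longrightarrow> ket_bra2 i $$ (j,k) = (if j = i \<and> k = i then 1 else 0)"
  unfolding ket_bra2_def by simp

lemma psd_mat_ket_bra2: "psd_mat 2 (ket_bra2 i)"
  by (rule psd_matI_gram[where K="{0::nat}" and c="\<lambda>_. 1" and w="\<lambda>_ a. if a = i then 1 else 0"])
     (auto simp: ket_bra2_carrier index_ket_bra2)

lemma mtrace_ket_bra2: "i < 2 \<Longrightarrow> mtrace (ket_bra2 i) = 1"
  unfolding mtrace_carrier_mat[OF ket_bra2_carrier] by (auto simp: index_ket_bra2 numeral_2_eq_2 lessThan_Suc)

fun from_digits :: "nat \<Rightarrow> nat \<Rightarrow> (nat \<Rightarrow> nat) \<Rightarrow> nat" where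
  "from_digits d 0 h = 0"
| "from_digits d (Suc m) h = h 0 * d ^ m + from_digits d m (\<lambda>k. h (Suc k))"

definition digit :: "nat \<Rightarrow> nat \<Rightarrow> nat \<Rightarrow> nat \<Rightarrow> nat" where
  "digit d n k a = a div d ^ (n - 1 - k) mod d"

lemma divmod_aux: "r < (D::nat) \<Longrightarrow> (q * D + r) div D = q" "r < (D::nat) \<Longrightarrow> (q * D + r) mod D = r"
  by simp_all

lemma from_digits_cong: "(\<And>k. k < n \<Longrightarrow> h k = h' k) \<Longrightarrow> from_digits d n h = from_digits d n h'"
proof (induction n arbitrary: h h')
  case 0 thus ?case by simp
next
  case (Suc m)
  have "from_digits d m (\<lambda>k. h (Suc k)) = from_digits d m (\<lambda>k. h' (Suc k))" by (rule Suc.IH) (use Suc.prems in simp)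
  thus ?case using Suc.prems[of 0] by simp
qed

lemma dpos: "a < d ^ Suc m \<Longrightarrow> 0 < (d::nat)"
  by (cases d) auto

lemma digit_Suc_0: assumes "a < d ^ Suc m" shows "digit d (Suc m) 0 a = a div d ^ m"
proof -
  have "a div d ^ m < d" using assms by (simp add: less_mult_imp_div_less mult.commute)
  thus ?thesis unfolding digit_def by simp
qed

lemma digit_Suc_Suc: assumes k: "k < m" shows "digit d (Suc m) (Suc k) a = digit d m k (a mod d ^ m)"
proof -
  define j where "j = m - 1 - k"
  have jm: "j < m" and ej: "m = j + (m - j)" and mj: "m - j \<ge> 1" using k unfolding j_def by auto
  have "(a mod d ^ m) div d ^ j mod d = a div d ^ j mod d"
  proof (cases "d = 0")
    case True
    then show ?thesis using jm by (cases j) (auto simp: zero_power)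
  next
    case False
    have dm: "d ^ m = d ^ j * d ^ (m - j)" by (metis ej power_add)
    have "(a mod d ^ m) div d ^ j = (d ^ j * (a div d ^ j mod d ^ (m - j)) + a mod d ^ j) div d ^ j"
      unfolding dm mod_mult2_eq ..
    also have "\<dots> = a div d ^ j mod d ^ (m - j)" using False by simp
    finally have "(a mod d ^ m) div d ^ j mod d = a div d ^ j mod d ^ (m - j) mod d" by simp
    also have "\<dots> = a div d ^ j mod d" proof (rule mod_mod_cancel)
      have "0 < m - j" using mj by simp
      thus "d dvd d ^ (m - j)" by (intro dvd_power) simp
    qed
    finally show ?thesis .
  qed
  thus ?thesis unfolding digit_def j_def by simp
qed

lemma from_digits_less: "(\<And>k. k < n \<Longrightarrow> h k < d) \<Longrightarrow> from_digits d n h < d ^ n"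
proof (induction n arbitrary: h)
  case 0 thus ?case by simp
next
  case (Suc m)
  have r: "from_digits d m (\<lambda>k. h (Suc k)) < d ^ m" by (rule Suc.IH) (use Suc.prems in simp)
  have h0: "h 0 + 1 \<le> d" using Suc.prems[of 0] by simp
  have "from_digits d (Suc m) h < h 0 * d ^ m + d ^ m" using r by simp
  also have "\<dots> = (h 0 + 1) * d ^ m" by simp
  also have "\<dots> \<le> d * d ^ m" using h0 by (rule mult_right_mono) simp
  finally show ?case by simp
qed

lemma digit_from_digits: "(\<And>k. k < n \<Longrightarrow> h k < d) \<Longrightarrow> k < n \<Longrightarrow> digit d n k (from_digits d n h) = h k"
proof (induction n arbitrary: h k)
  case 0 thus ?case by simp
next
  case (Suc m)
  define r where "r = from_digits d m (\<lambda>k. h (Suc k))"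
  have r: "r < d ^ m" unfolding r_def by (rule from_digits_less) (use Suc.prems in simp)
  have a: "from_digits d (Suc m) h < d ^ Suc m" by (rule from_digits_less) (use Suc.prems in simp)
  have ad: "from_digits d (Suc m) h div d ^ m = h 0" using divmod_aux(1)[OF r, of "h 0"] by (simp add: r_def)
  have am: "from_digits d (Suc m) h mod d ^ m = r" using divmod_aux(2)[OF r, of "h 0"] by (simp add: r_def)
  show ?case
  proof (cases k)
    case 0 thus ?thesis using digit_Suc_0[OF a] ad by simp
  next
    case (Suc k')
    have k': "k' < m" using Suc.prems(2) Suc by simp
    have "digit d (Suc m) (Suc k') (from_digits d (Suc m) h) = digit d m k' r" using digit_Suc_Suc[OF k'] am by simp
    also have "\<dots> = h (Suc k')" unfolding r_def by (rule Suc.IH) (use Suc.prems k' in simp_all)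
    finally show ?thesis using Suc by simp
  qed
qed

lemma from_digits_digit: "a < d ^ n \<Longrightarrow> from_digits d n (\<lambda>k. digit d n k a) = a"
proof (induction n arbitrary: a)
  case 0 thus ?case by simp
next
  case (Suc m)
  have dp: "0 < d" using dpos[OF Suc.prems] .
  have am: "a mod d ^ m < d ^ m" using dp by simp
  have "from_digits d (Suc m) (\<lambda>k. digit d (Suc m) k a) = digit d (Suc m) 0 a * d ^ m + from_digits d m (\<lambda>k. digit d (Suc m) (Suc k) a)"
    by simp
  also have "from_digits d m (\<lambda>k. digit d (Suc m) (Suc k) a) = from_digits d m (\<lambda>k. digit d m k (a mod d ^ m))"
    by (rule from_digits_cong) (simp add: digit_Suc_Suc)
  also have "\<dots> = a mod d ^ m" by (rule Suc.IH[OF am])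
  also have "digit d (Suc m) 0 a = a div d ^ m" by (rule digit_Suc_0[OF Suc.prems])
  finally show ?case using div_mult_mod_eq[of a "d ^ m"] by simp
qed

lemma digit_less: "0 < d \<Longrightarrow> digit d n k a < d"
  unfolding digit_def by simp

lemma index_kron_list:
  assumes "\<And>F. F \<in> set Fs \<Longrightarrow> F \<in> carrier_mat d d" and "a < d ^ length Fs" and "b < d ^ length Fs"
  shows "kron_list Fs $$ (a,b) = (\<Prod>k<length Fs. (Fs!k) $$ (digit d (length Fs) k a, digit d (length Fs) k b))"
  using assms
proof (induction Fs arbitrary: a b)
  case Nil thus ?case by simp
next
  case (Cons F Fs)
  define m where "m = length Fs"
  have F: "F \<in> carrier_mat d d" using Cons.prems by simp
  have K: "kron_list Fs \<in> carrier_mat (d ^ m) (d ^ m)" unfolding m_def by (rule kron_list_carrier) (use Cons.prems in simp)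
  have a: "a < d * d ^ m" and b: "b < d * d ^ m" using Cons.prems m_def by simp_all
  have a': "a < d ^ Suc m" and b': "b < d ^ Suc m" using a b by simp_all
  have dp: "0 < d" using dpos[OF a'] .
  have am: "a mod d ^ m < d ^ m" and bm: "b mod d ^ m < d ^ m" using dp by simp_all
  have "kron_list (F # Fs) $$ (a,b) = F $$ (a div d ^ m, b div d ^ m) * kron_list Fs $$ (a mod d ^ m, b mod d ^ m)"
    using index_kron[OF F K a b] by simp
  also have "kron_list Fs $$ (a mod d ^ m, b mod d ^ m) = (\<Prod>k<m. (Fs!k) $$ (digit d m k (a mod d ^ m), digit d m k (b mod d ^ m)))"
    unfolding m_def by (rule Cons.IH) (use Cons.prems am bm m_def in simp_all)
  also have "\<dots> = (\<Prod>k<m. ((F # Fs)!(Suc k)) $$ (digit d (Suc m) (Suc k) a, digit d (Suc m) (Suc k) b))"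
    by (intro prod.cong refl) (simp add: digit_Suc_Suc)
  also have "F $$ (a div d ^ m, b div d ^ m) = ((F # Fs)!0) $$ (digit d (Suc m) 0 a, digit d (Suc m) 0 b)"
    using digit_Suc_0[OF a'] digit_Suc_0[OF b'] by simp
  also have "((F # Fs)!0) $$ (digit d (Suc m) 0 a, digit d (Suc m) 0 b) *
      (\<Prod>k<m. ((F # Fs)!(Suc k)) $$ (digit d (Suc m) (Suc k) a, digit d (Suc m) (Suc k) b)) =
      (\<Prod>k<Suc m. ((F # Fs)!k) $$ (digit d (Suc m) k a, digit d (Suc m) k b))"
    by (rule prod.lessThan_Suc_shift[symmetric])
  finally have "kron_list (F # Fs) $$ (a,b) = (\<Prod>k<Suc m. ((F # Fs)!k) $$ (digit d (Suc m) k a, digit d (Suc m) k b))" .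
  thus ?case unfolding m_def by simp
qed

lemma kron_list_mset_eq_reindex:
  fixes xs ys :: "'x list"
  assumes mset: "mset xs = mset ys"
  shows "\<exists>\<phi>. bij_betw \<phi> {..<d ^ length xs} {..<d ^ length xs} \<and>
     (\<forall>g::'x \<Rightarrow> complex mat. (\<forall>x. g x \<in> carrier_mat d d) \<longrightarrow>
       (\<forall>a<d ^ length xs. \<forall>b<d ^ length xs. kron_list (map g xs) $$ (a,b) = kron_list (map g ys) $$ (\<phi> a, \<phi> b)))"
proof -
  define n where "n = length xs"
  have len: "length ys = n" using mset_eq_length[OF mset] n_def by simp
  obtain \<pi> where pi: "bij_betw \<pi> {..<n} {..<n}" and xy: "\<forall>i<n. xs ! i = ys ! (\<pi> i)"
    using permutation_Ex_bij[OF mset] len n_def by auto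
  show ?thesis
  proof (cases "d = 0")
    case True
    show ?thesis
    proof (cases "n = 0")
      case True
      hence "xs = []" "ys = []" using len n_def by auto
      thus ?thesis by (auto intro: bij_betw_id)
    next
      case False
      hence z: "d ^ length xs = 0" using \<open>d = 0\<close> n_def by simp
      show ?thesis unfolding z by (rule exI[of _ id]) simp
    qed
  next
    case False
    hence dp: "0 < d" by simp
    define pinv where "pinv = inv_into {..<n} \<pi>"
    have pinv_pi: "pinv (\<pi> k) = k" if "k < n" for k
      unfolding pinv_def using pi that by (simp add: bij_betw_def inv_into_f_f)
    have pi_lt: "\<pi> k < n" if "k < n" for k using pi that by (auto simp: bij_betw_def)
    have pinv_bij: "bij_betw pinv {..<n} {..<n}" unfolding pinv_def by (rule bij_betw_inv_into[OF pi])
    have pinv_lt: "pinv j < n" if "j < n" for j using pinv_bij that by (auto simp: bij_betw_def)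
    define \<phi> where "\<phi> a = from_digits d n (\<lambda>j. digit d n (pinv j) a)" for a
    have phi_lt: "\<phi> a < d ^ n" for a unfolding \<phi>_def by (rule from_digits_less) (simp add: digit_less dp)
    have dg_phi: "digit d n j (\<phi> a) = digit d n (pinv j) a" if "j < n" for j a
      unfolding \<phi>_def by (rule digit_from_digits) (simp_all add: digit_less dp that)
    have inj: "inj_on \<phi> {..<d ^ n}"
    proof (rule inj_onI)
      fix a a' assume a: "a \<in> {..<d ^ n}" and a': "a' \<in> {..<d ^ n}" and e: "\<phi> a = \<phi> a'"
      have "digit d n k a = digit d n k a'" if k: "k < n" for k
        using dg_phi[OF pi_lt[OF k], of a] dg_phi[OF pi_lt[OF k], of a'] e pinv_pi[OF k] by simp
      hence "from_digits d n (\<lambda>k. digit d n k a) = from_digits d n (\<lambda>k. digit d n k a')" by (rule from_digits_cong)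
      thus "a = a'" using from_digits_digit[of a d n] from_digits_digit[of a' d n] a a' by simp
    qed
    have bij: "bij_betw \<phi> {..<d ^ n} {..<d ^ n}"
      unfolding bij_betw_def using inj endo_inj_surj[OF _ _ inj] phi_lt by auto
    have ent: "kron_list (map g xs) $$ (a,b) = kron_list (map g ys) $$ (\<phi> a, \<phi> b)"
      if g: "\<forall>x. g x \<in> carrier_mat d d" and a: "a < d ^ n" and b: "b < d ^ n" for g a b
    proof -
      have "kron_list (map g xs) $$ (a,b) = (\<Prod>k<length (map g xs). (map g xs!k) $$ (digit d (length (map g xs)) k a, digit d (length (map g xs)) k b))"
        by (rule index_kron_list) (use g a b n_def in auto)
      also have "\<dots> = (\<Prod>k<n. g (xs!k) $$ (digit d n k a, digit d n k b))" using n_def by simp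
      finally have "kron_list (map g xs) $$ (a,b) = (\<Prod>k<n. g (xs!k) $$ (digit d n k a, digit d n k b))" .
      also have "\<dots> = (\<Prod>k<n. g (ys!(\<pi> k)) $$ (digit d n (pinv (\<pi> k)) a, digit d n (pinv (\<pi> k)) b))"
        by (intro prod.cong refl) (simp add: xy pinv_pi)
      also have "\<dots> = (\<Prod>j<n. g (ys!j) $$ (digit d n (pinv j) a, digit d n (pinv j) b))"
        by (rule prod.reindex_bij_betw[OF pi])
      also have "\<dots> = (\<Prod>j<n. g (ys!j) $$ (digit d n j (\<phi> a), digit d n j (\<phi> b)))"
        by (intro prod.cong refl) (simp add: dg_phi)
      also have "\<dots> = (\<Prod>k<length (map g ys). (map g ys!k) $$ (digit d (length (map g ys)) k (\<phi> a), digit d (length (map g ys)) k (\<phi> b)))"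
        using len by simp
      also have "\<dots> = kron_list (map g ys) $$ (\<phi> a, \<phi> b)"
        by (rule index_kron_list[symmetric]) (use g phi_lt len in auto)
      finally show ?thesis .
    qed
    show ?thesis using bij ent n_def by blast
  qed
qed

lemma density_opsD:
  assumes "\<rho> \<in> density_ops d"
  shows "psd_mat d \<rho>" "\<rho> \<in> carrier_mat d d" "mtrace \<rho> = 1"
  using assms psd_mat_hermitian hermitian_mat_carrier unfolding density_ops_def by auto

lemma kron_density_ops:
  assumes "A \<in> density_ops n1" "B \<in> density_ops n2"
  shows "kron A B \<in> density_ops (n1 * n2)"
  using psd_mat_kron[OF density_opsD(1)[OF assms(1)] density_opsD(1)[OF assms(2)]]
    mtrace_kron[OF density_opsD(2)[OF assms(1)] density_opsD(2)[OF assms(2)]] density_opsD(3)[OF assms(1)] density_opsD(3)[OF assms(2)]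
  unfolding density_ops_def by simp

lemma kron_list_density_ops:
  "(\<And>F. F \<in> set Fs \<Longrightarrow> F \<in> density_ops d) \<Longrightarrow> kron_list Fs \<in> density_ops (d ^ length Fs)"
  using psd_mat_kron_list[of Fs d] mtrace_kron_list[of Fs d] density_opsD
  unfolding density_ops_def by blast

lemma ket_bra2_density_ops: "i < 2 \<Longrightarrow> ket_bra2 i \<in> density_ops 2"
  using psd_mat_ket_bra2 mtrace_ket_bra2 unfolding density_ops_def by blast

lemma tensor_channel_I2_density_ops:
  assumes "is_cq_channel d W" "length xs = n" "i < 2"
  shows "tensor_channel_I2 W (xs, i) \<in> density_ops (d ^ n * 2)"
  using assms kron_density_ops[OF kron_list_density_ops ket_bra2_density_ops, of "map W xs" d i]
  unfolding tensor_channel_I2_def is_cq_channel_def by auto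

lemma kron_minus_left:
  assumes A: "A \<in> carrier_mat n n" and B: "B \<in> carrier_mat n n" and C: "C \<in> carrier_mat m m"
  shows "kron A C - kron B C = kron (A - B) C"
proof (rule eq_matI)
  fix i j assume "i < dim_row (kron (A - B) C)" "j < dim_col (kron (A - B) C)"
  hence i: "i < n * m" and j: "j < n * m" using A B C by auto
  show "(kron A C - kron B C) $$ (i, j) = kron (A - B) C $$ (i, j)"
    using index_kron[OF A C i j] index_kron[OF B C i j] index_kron[OF minus_carrier_mat[OF B, of A] C i j]
      div_mod_less_mult[OF i] div_mod_less_mult[OF j] i j A B C
    by (simp add: carrier_matD algebra_simps)
qed (use A B C in auto)

lemma mtrace_mult_le_shifted:
  assumes L0: "loewner_le N (0\<^sub>m N N) L" and L1: "loewner_le N L (complex_of_real p \<cdot>\<^sub>m 1\<^sub>m N)"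
    and V: "psd_mat N V" and B: "psd_mat N B"
  shows "Re (mtrace (L * V)) \<le>
    p * (Re (mtrace V) - Re (mtrace B) + Re (mtrace (mat_abs N (V - B)))) / 2 + Re (mtrace (L * B))"
proof -
  have Lc: "L \<in> carrier_mat N N" using L0 unfolding loewner_le_def hermitian_mat_def by auto
  have Vc: "V \<in> carrier_mat N N" and Bc: "B \<in> carrier_mat N N"
    using V B psd_mat_hermitian hermitian_mat_carrier by blast+
  have "mtrace (L * (V - B)) = mtrace (L * V) - mtrace (L * B)"
    using mtrace_minus[of "L * V" N "L * B"] Lc Vc Bc by (simp add: mult_minus_distrib_mat)
  moreover have "Re (mtrace (L * (V - B))) \<le> p * (Re (mtrace (V - B)) + Re (mtrace (mat_abs N (V - B)))) / 2"
    by (rule mtrace_mult_le_positive_part[OF L0 L1 hermitian_mat_diff[OF psd_mat_hermitian[OF V] psd_mat_hermitian[OF B]]])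
  ultimately show ?thesis using mtrace_minus[OF Vc Bc] by simp
qed

lemma mtrace_abs_kron_ket_bra2_le:
  assumes X: "X \<in> carrier_mat N N" and XH: "hermitian_mat (N * 2) (kron X (ket_bra2 i))"
    and Z: "hermitian_mat N Z" and \<phi>: "bij_betw \<phi> {..<N} {..<N}"
    and XZ: "\<And>a b. a < N \<Longrightarrow> b < N \<Longrightarrow> X $$ (\<phi> a, \<phi> b) = Z $$ (a, b)" and i: "i < 2"
  shows "Re (mtrace (mat_abs (N * 2) (kron X (ket_bra2 i)))) \<le> Re (mtrace (mat_abs N Z))"
proof -
  define \<psi> where "\<psi> a = \<phi> a * 2 + i" for a
  have \<psi>_div: "\<psi> a div 2 = \<phi> a" "\<psi> a mod 2 = i" for a unfolding \<psi>_def using i by simp_all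
  have inj: "inj_on \<psi> {..<N}" using \<phi> unfolding \<psi>_def bij_betw_def inj_on_def by auto
  have \<psi>_less: "\<psi> a < N * 2" if "a < N" for a
  proof -
    have "\<phi> a < N" using \<phi> that unfolding bij_betw_def by auto
    thus ?thesis using i unfolding \<psi>_def by linarith
  qed
  have entry: "kron X (ket_bra2 i) $$ (a', b') =
      X $$ (a' div 2, b' div 2) * ket_bra2 i $$ (a' mod 2, b' mod 2)" if "a' < N * 2" "b' < N * 2" for a' b'
    by (rule index_kron[OF X ket_bra2_carrier that])
  have in_image: "a' \<in> \<psi> ` {..<N}" if "a' < N * 2" "a' mod 2 = i" for a'
  proof -
    have "a' div 2 \<in> \<phi> ` {..<N}" using \<phi> that(1) unfolding bij_betw_def by auto
    then obtain c where "c < N" "\<phi> c = a' div 2" by auto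
    thus ?thesis using that(2) div_mult_mod_eq[of a' 2] unfolding \<psi>_def by force
  qed
  show ?thesis
  proof (rule mtrace_abs_compression_le[OF XH Z inj])
    show "\<psi> ` {..<N} \<subseteq> {..<N * 2}" using \<psi>_less by auto
    show "kron X (ket_bra2 i) $$ (\<psi> a, \<psi> b) = Z $$ (a, b)" if "a < N" "b < N" for a b
      using entry[OF \<psi>_less \<psi>_less] that \<psi>_div XZ[OF that] i by (simp add: index_ket_bra2)
    show "kron X (ket_bra2 i) $$ (a', b') = 0"
      if "a' < N * 2" "b' < N * 2" "a' \<notin> \<psi> ` {..<N} \<or> b' \<notin> \<psi> ` {..<N}" for a' b'
      using entry[OF that(1,2)] in_image that by (auto simp: index_ket_bra2)
  qed
qed

text \<open>All messages with the same type have unitarily equivalent outputs, so the trace distance to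
  the permutation-invariant operator \<open>Y \<otimes> |i\<rangle>\<langle>i|\<close> depends only on the type.\<close>
lemma mtrace_abs_tensor_channel_I2_le:
  fixes W :: "'x \<Rightarrow> complex mat"
  assumes chan: "is_cq_channel d W" and xs: "length xs = n" and ys: "mset ys = mset xs"
    and i: "i < 2" and \<sigma>: "\<sigma> \<in> density_ops d" and c: "0 \<le> c"
  defines "Y \<equiv> complex_of_real c \<cdot>\<^sub>m kron_list (replicate n \<sigma>)"
  shows "Re (mtrace (mat_abs (d ^ n * 2) (tensor_channel_I2 W (xs, i) - kron Y (ket_bra2 i))))
    \<le> Re (mtrace (mat_abs (d ^ n) (kron_list (map W ys) - Y)))"
proof -
  define N where "N = d ^ n"
  define Kx where "Kx = kron_list (map W xs)"
  define Ky where "Ky = kron_list (map W ys)"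
  have ly: "length ys = n" using mset_eq_length[OF ys] xs by simp
  have W: "W x \<in> density_ops d" for x using chan unfolding is_cq_channel_def by blast
  have Kx: "Kx \<in> density_ops N" and Ky: "Ky \<in> density_ops N" and S: "kron_list (replicate n \<sigma>) \<in> density_ops N"
    using kron_list_density_ops[of "map W xs" d] kron_list_density_ops[of "map W ys" d]
      kron_list_density_ops[of "replicate n \<sigma>" d] W \<sigma> xs ly unfolding Kx_def Ky_def N_def by auto
  have YP: "psd_mat N Y" unfolding Y_def by (rule psd_mat_smult[OF c density_opsD(1)[OF S]])
  have Yc: "Y \<in> carrier_mat N N" using YP psd_mat_hermitian hermitian_mat_carrier by blast
  have Kxc: "Kx \<in> carrier_mat N N" and Kyc: "Ky \<in> carrier_mat N N" using Kx Ky by (simp_all add: density_opsD)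
  obtain \<phi> where \<phi>: "bij_betw \<phi> {..<N} {..<N}"
    and perm: "\<And>g :: 'x \<Rightarrow> complex mat. (\<forall>x. g x \<in> carrier_mat d d) \<Longrightarrow> a < N \<Longrightarrow> b < N \<Longrightarrow>
      kron_list (map g ys) $$ (a, b) = kron_list (map g xs) $$ (\<phi> a, \<phi> b)" for a b
    using kron_list_mset_eq_reindex[OF ys, of d] ly unfolding N_def by blast
  have \<phi>_less: "\<phi> a < N" if "a < N" for a using \<phi> that by (auto simp: bij_betw_def)
  have "kron_list (replicate n \<sigma>) $$ (a, b) = kron_list (replicate n \<sigma>) $$ (\<phi> a, \<phi> b)"
    if "a < N" "b < N" for a b
    using perm[of "\<lambda>_. \<sigma>", OF _ that] density_opsD(2)[OF \<sigma>] xs ly by (simp add: map_replicate_const)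
  hence Y_perm: "Y $$ (\<phi> a, \<phi> b) = Y $$ (a, b)" if "a < N" "b < N" for a b
    using that \<phi>_less[OF that(1)] \<phi>_less[OF that(2)] density_opsD(2)[OF S] unfolding Y_def
    by (simp add: carrier_matD)
  have "tensor_channel_I2 W (xs, i) - kron Y (ket_bra2 i) = kron (Kx - Y) (ket_bra2 i)"
    using kron_minus_left[OF Kxc Yc ket_bra2_carrier] unfolding tensor_channel_I2_def Kx_def by simp
  moreover have "hermitian_mat (N * 2) (tensor_channel_I2 W (xs, i) - kron Y (ket_bra2 i))"
    using density_opsD(1)[OF tensor_channel_I2_density_ops[OF chan xs i]]
      psd_mat_kron[OF YP psd_mat_ket_bra2] unfolding N_def
    by (intro hermitian_mat_diff psd_mat_hermitian) auto
  moreover have "(Kx - Y) $$ (\<phi> a, \<phi> b) = (Ky - Y) $$ (a, b)" if "a < N" "b < N" for a b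
    using perm[of W, OF _ that] W density_opsD(2) Y_perm[OF that] that \<phi>_less[OF that(1)] \<phi>_less[OF that(2)]
      Kxc Kyc Yc unfolding Kx_def Ky_def by (simp add: carrier_matD)
  ultimately show ?thesis unfolding N_def[symmetric] Ky_def[symmetric]
    using mtrace_abs_kron_ket_bra2_le[OF minus_carrier_mat[OF Yc] _ _ \<phi> _ i]
      hermitian_mat_diff[OF psd_mat_hermitian[OF density_opsD(1)[OF Ky]] psd_mat_hermitian[OF YP]]
    by simp
qed

definition ns_feasible :: "nat \<Rightarrow> 'a set \<Rightarrow> real \<Rightarrow> ('a \<Rightarrow> complex mat) \<Rightarrow> ('a \<Rightarrow> real) \<Rightarrow> bool" where
  "ns_feasible D A M \<Lambda> p \<longleftrightarrow> mat D D (\<lambda>ij. \<Sum>x\<in>A. \<Lambda> x $$ ij) = 1\<^sub>m D \<and>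
     (\<forall>x\<in>A. p x \<ge> 0 \<and> loewner_le D (0\<^sub>m D D) (\<Lambda> x)
       \<and> loewner_le D (\<Lambda> x) (complex_of_real (p x) \<cdot>\<^sub>m 1\<^sub>m D)) \<and>
     (\<Sum>x\<in>A. p x) = M"

definition ns_success :: "real \<Rightarrow> 'a set \<Rightarrow> ('a \<Rightarrow> complex mat) \<Rightarrow> ('a \<Rightarrow> complex mat) \<Rightarrow> real" where
  "ns_success M A W \<Lambda> = (1 / M) * (\<Sum>x\<in>A. Re (mtrace (\<Lambda> x * W x)))"

lemma eps_NS_eq_Sup_ns_success:
  "eps_NS M A W D = 1 - Sup {ns_success M A W \<Lambda> | \<Lambda> p. ns_feasible D A M \<Lambda> p}"
  unfolding eps_NS_def ns_success_def ns_feasible_def ..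

lemma ns_feasible_exists:
  assumes fin: "finite A" and ne: "A \<noteq> {}" and M: "1 \<le> M"
  shows "\<exists>\<Lambda> p. ns_feasible D A M \<Lambda> p"
proof -
  define k where "k = real (card A)"
  have k: "0 < k" unfolding k_def using fin ne by (simp add: card_gt_0_iff)
  define \<Lambda> where "\<Lambda> = (\<lambda>x::'a. complex_of_real (1 / k) \<cdot>\<^sub>m 1\<^sub>m D)"
  define p where "p = (\<lambda>x::'a. M / k)"
  have "mat D D (\<lambda>ij. \<Sum>x\<in>A. \<Lambda> x $$ ij) = 1\<^sub>m D"
    by (rule eq_matI) (use k in \<open>auto simp: \<Lambda>_def k_def\<close>)
  moreover have "loewner_le D (0\<^sub>m D D) (\<Lambda> x)" for x
    using psd_mat_smult_one[of "1 / k" D] k hermitian_mat_zero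
    unfolding \<Lambda>_def loewner_le_def by (simp add: psd_mat_hermitian minus_zero_mat_right)
  moreover have "loewner_le D (\<Lambda> x) (complex_of_real (p x) \<cdot>\<^sub>m 1\<^sub>m D)" for x
  proof -
    have "0 \<le> M / k - 1 / k" using M k by (simp add: diff_divide_distrib[symmetric])
    thus ?thesis
      using psd_mat_smult_one[of "1 / k" D] psd_mat_smult_one[of "M / k" D] psd_mat_smult_one[of "M / k - 1 / k" D] k M
      unfolding \<Lambda>_def p_def loewner_le_def smult_one_minus by (simp add: psd_mat_hermitian)
  qed
  moreover have "(\<Sum>x\<in>A. p x) = M" unfolding p_def k_def using k k_def by simp
  moreover have "0 \<le> p x" for x unfolding p_def using M k by simp
  ultimately show ?thesis unfolding ns_feasible_def by blast
qed

lemma eps_NS_lower_bound: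
  assumes "finite A" "A \<noteq> {}" "1 \<le> M"
    and bound: "\<And>\<Lambda> p. ns_feasible D A M \<Lambda> p \<Longrightarrow> ns_success M A W \<Lambda> \<le> 1 - b"
  shows "b \<le> eps_NS M A W D"
proof -
  have "Sup {ns_success M A W \<Lambda> | \<Lambda> p. ns_feasible D A M \<Lambda> p} \<le> 1 - b"
    by (rule cSup_least) (use ns_feasible_exists[OF assms(1-3)] bound in auto)
  thus ?thesis unfolding eps_NS_eq_Sup_ns_success by simp
qed

lemma mset_eq_iff_count_list: "mset xs = mset ys \<longleftrightarrow> count_list xs = count_list ys"
  by (simp add: multiset_eq_iff count_mset fun_eq_iff)

lemma message_set_nonempty: "{xs :: 'x list. length xs = n} \<times> {0::nat, 1} \<noteq> {}"
  by (auto intro: exI[of _ "replicate n undefined"])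

lemma finite_message_set: "finite ({xs :: 'x::finite list. length xs = n} \<times> {0::nat, 1})"
  using finite_lists_length_eq[OF finite_UNIV, of n] by (intro finite_cartesian_product) auto

text \<open>The converse bound for a single feasible code: messages of one (type, bit) class \<open>C\<close> are
  tested against \<open>W_T\<^sup>\<otimes>\<^sup>n\<close> versus \<open>M s \<sigma>\<^sup>\<otimes>\<^sup>n \<otimes> |i\<^sub>0\<rangle>\<langle>i\<^sub>0|\<close>; the trace of \<open>\<Lambda>\<close> against the latter
  sums to \<open>M s\<close> because \<open>\<Lambda>\<close> is a POVM.\<close>
lemma ns_success_le_class_bound:
  fixes W :: "'x::finite \<Rightarrow> complex mat" and \<Lambda> :: "'x list \<times> nat \<Rightarrow> complex mat"
    and n i0 :: nat and ys :: "'x list"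
  defines "A \<equiv> {xs. length xs = n} \<times> {0, 1}"
    and "C \<equiv> {x \<in> {xs. length xs = n} \<times> {0, 1}. (count_list (fst x), snd x) = (count_list ys, i0)}"
  assumes chan: "is_cq_channel d W" and M: "0 < M"
    and code: "ns_feasible (d ^ n * 2) A M \<Lambda> p"
    and ys: "length ys = n" and i0: "i0 < 2"
    and mass: "M * \<gamma> \<le> (\<Sum>x\<in>C. p x)" and \<sigma>: "\<sigma> \<in> density_ops d" and s: "0 \<le> s"
  shows "ns_success M A (tensor_channel_I2 W) \<Lambda> \<le> 1 - (\<gamma> * Re (mtrace (mat_wedge (d ^ n)
    (kron_list (map W ys)) (complex_of_real (M * s) \<cdot>\<^sub>m kron_list (replicate n \<sigma>)))) - s)"
proof -
  define N where "N = d ^ n"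
  define c where "c = M * s"
  define Y where "Y = complex_of_real c \<cdot>\<^sub>m kron_list (replicate n \<sigma>)"
  define B where "B = kron Y (ket_bra2 i0)"
  define Ky where "Ky = kron_list (map W ys)"
  define F where "F = Re (mtrace (mat_wedge N Ky Y))"
  define t where "t = Re (mtrace (mat_abs N (Ky - Y)))"
  have c: "0 \<le> c" using M s unfolding c_def by simp
  have W: "W x \<in> density_ops d" for x using chan unfolding is_cq_channel_def by blast
  have S: "kron_list (replicate n \<sigma>) \<in> density_ops N"
    using kron_list_density_ops[of "replicate n \<sigma>" d] \<sigma> unfolding N_def by auto
  have Ky: "Ky \<in> density_ops N"
    using kron_list_density_ops[of "map W ys" d] W ys unfolding Ky_def N_def by auto
  have YP: "psd_mat N Y" unfolding Y_def by (rule psd_mat_smult[OF c density_opsD(1)[OF S]])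
  have Yc: "Y \<in> carrier_mat N N" using YP psd_mat_hermitian hermitian_mat_carrier by blast
  have Yt: "mtrace Y = c"
    unfolding Y_def using mtrace_smult[OF density_opsD(2)[OF S]] density_opsD(3)[OF S] by simp
  have BP: "psd_mat (N * 2) B" unfolding B_def by (rule psd_mat_kron[OF YP psd_mat_ket_bra2])
  have Bc: "B \<in> carrier_mat (N * 2) (N * 2)" using BP psd_mat_hermitian hermitian_mat_carrier by blast
  have Bt: "mtrace B = c"
    unfolding B_def using mtrace_kron[OF Yc ket_bra2_carrier] Yt mtrace_ket_bra2[OF i0] by simp
  have KyY: "hermitian_mat N (Ky - Y)"
    by (rule hermitian_mat_diff[OF psd_mat_hermitian[OF density_opsD(1)[OF Ky]] psd_mat_hermitian[OF YP]])
  have F: "F = (1 + c - t) / 2"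
    unfolding F_def t_def mtrace_mat_wedge[OF density_opsD(2)[OF Ky] Yc KyY]
    using density_opsD(3)[OF Ky] Yt by simp
  have "t \<le> 1 + c"
    unfolding t_def using mtrace_abs_diff_le[OF density_opsD(1)[OF Ky] YP] density_opsD(3)[OF Ky] Yt by simp
  hence F0: "0 \<le> F" using F by simp
  have sum1: "mat (N * 2) (N * 2) (\<lambda>ij. \<Sum>x\<in>A. \<Lambda> x $$ ij) = 1\<^sub>m (N * 2)"
    and Lx: "\<And>x. x \<in> A \<Longrightarrow> 0 \<le> p x \<and> loewner_le (N * 2) (0\<^sub>m (N * 2) (N * 2)) (\<Lambda> x)
      \<and> loewner_le (N * 2) (\<Lambda> x) (complex_of_real (p x) \<cdot>\<^sub>m 1\<^sub>m (N * 2))"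
    and sum_p: "(\<Sum>x\<in>A. p x) = M"
    using code unfolding ns_feasible_def N_def by auto
  have Lc: "\<Lambda> x \<in> carrier_mat (N * 2) (N * 2)" if "x \<in> A" for x
    using Lx[OF that] unfolding loewner_le_def hermitian_mat_def by auto
  define b where "b x = (if x \<in> C then p x * (1 - F) else p x)" for x
  have msg: "Re (mtrace (\<Lambda> x * tensor_channel_I2 W x)) \<le> b x + Re (mtrace (\<Lambda> x * B))"
    if x: "x \<in> A" for x
  proof -
    obtain xs i where x_eq: "x = (xs, i)" and xs: "length xs = n" and i: "i < 2"
      using x unfolding A_def by auto
    define V where "V = tensor_channel_I2 W x"
    have V: "V \<in> density_ops (N * 2)"
      unfolding V_def x_eq N_def by (rule tensor_channel_I2_density_ops[OF chan xs i])
    define T where "T = Re (mtrace (mat_abs (N * 2) (V - B)))"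
    have "Re (mtrace (\<Lambda> x * V)) \<le> p x * (1 - c + T) / 2 + Re (mtrace (\<Lambda> x * B))"
      using mtrace_mult_le_shifted[of "N * 2" "\<Lambda> x" "p x" V B] Lx[OF x] density_opsD(1,3)[OF V] BP Bt
      unfolding T_def by simp
    moreover have "p x * (1 - c + T) / 2 \<le> b x"
    proof (cases "x \<in> C")
      case True
      hence "i = i0" "mset ys = mset xs" using x_eq unfolding C_def mset_eq_iff_count_list by auto
      hence "T \<le> t"
        using mtrace_abs_tensor_channel_I2_le[OF chan xs _ i \<sigma> c, of ys]
        unfolding T_def t_def V_def x_eq B_def Y_def Ky_def N_def by simp
      hence "1 - c + T \<le> 2 * (1 - F)" using F by simp
      hence "p x * (1 - c + T) \<le> p x * (2 * (1 - F))"
        using Lx[OF x] by (intro mult_left_mono) auto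
      also have "\<dots> = 2 * (p x * (1 - F))" by (rule mult.left_commute)
      finally have "p x * (1 - c + T) / 2 \<le> p x * (1 - F)" by linarith
      moreover have "b x = p x * (1 - F)" using True unfolding b_def by simp
      ultimately show ?thesis by linarith
    next
      case False
      have "T \<le> 1 + c" unfolding T_def
        using mtrace_abs_diff_le[OF density_opsD(1)[OF V] BP] density_opsD(3)[OF V] Bt by simp
      thus ?thesis using Lx[OF x] False unfolding b_def by (simp add: mult_left_mono divide_right_mono)
    qed
    ultimately show ?thesis unfolding V_def by linarith
  qed
  have fin: "finite A" unfolding A_def by (rule finite_message_set)
  have CA: "C \<subseteq> A" unfolding A_def C_def by blast
  have "(\<Sum>x\<in>A. Re (mtrace (\<Lambda> x * tensor_channel_I2 W x))) \<le> (\<Sum>x\<in>A. b x + Re (mtrace (\<Lambda> x * B)))"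
    by (rule sum_mono) (rule msg)
  also have "\<dots> = (\<Sum>x\<in>A. b x) + Re (\<Sum>x\<in>A. mtrace (\<Lambda> x * B))" by (simp add: sum.distrib)
  also have "(\<Sum>x\<in>A. mtrace (\<Lambda> x * B)) = c"
    using mtrace_sum_mult_partition[OF sum1 Lc Bc] Bt by simp
  also have "(\<Sum>x\<in>A. b x) = (\<Sum>x\<in>A. p x) - (\<Sum>x\<in>A. if x \<in> C then F * p x else 0)"
    unfolding b_def sum_subtractf[symmetric] by (intro sum.cong) (auto simp: algebra_simps)
  also have "(\<Sum>x\<in>A. if x \<in> C then F * p x else 0) = F * (\<Sum>x\<in>C. p x)"
    unfolding sum.inter_restrict[OF fin, symmetric] sum_distrib_left using CA by (simp add: Int_absorb1)
  finally have "(\<Sum>x\<in>A. Re (mtrace (\<Lambda> x * tensor_channel_I2 W x))) \<le> M - F * (\<Sum>x\<in>C. p x) + c"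
    using sum_p by simp
  moreover have "F * (M * \<gamma>) \<le> F * (\<Sum>x\<in>C. p x)" using mass F0 by (rule mult_left_mono)
  ultimately have "(\<Sum>x\<in>A. Re (mtrace (\<Lambda> x * tensor_channel_I2 W x))) \<le> M * (1 - (\<gamma> * F - s))"
    unfolding c_def by (simp add: algebra_simps)
  thus ?thesis
    using M unfolding ns_success_def F_def N_def Ky_def Y_def c_def by (simp add: field_simps)
qed

lemma exists_class_mass_ge_average:
  fixes \<kappa> :: "'a \<Rightarrow> 'b" and p :: "'a \<Rightarrow> real"
  assumes A: "finite A" "A \<noteq> {}" and card: "real (card (\<kappa> ` A)) \<le> k"
    and sum: "(\<Sum>x\<in>A. p x) = M" and M: "0 \<le> M"
  obtains x where "x \<in> A" "M / k \<le> (\<Sum>y\<in>{y \<in> A. \<kappa> y = \<kappa> x}. p y)"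
proof -
  define g where "g z = (\<Sum>y\<in>{y \<in> A. \<kappa> y = z}. p y)" for z
  have K: "finite (\<kappa> ` A)" "\<kappa> ` A \<noteq> {}" using A by auto
  have "M = (\<Sum>z\<in>\<kappa> ` A. g z)" unfolding g_def using sum.image_gen[OF A(1), of p \<kappa>] sum by simp
  also have "\<dots> \<le> real (card (\<kappa> ` A)) * Max (g ` \<kappa> ` A)"
    by (rule sum_bounded_above) (simp add: K(1))
  finally have "M / real (card (\<kappa> ` A)) \<le> Max (g ` \<kappa> ` A)"
    using K by (simp add: card_gt_0_iff divide_le_eq mult.commute)
  moreover have "M / k \<le> M / real (card (\<kappa> ` A))"
  proof -
    have "0 < real (card (\<kappa> ` A))" using K by (simp add: card_gt_0_iff)
    thus ?thesis using card M by (intro divide_left_mono mult_pos_pos) auto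
  qed
  moreover have "Max (g ` \<kappa> ` A) \<in> g ` \<kappa> ` A" using K by (intro Max_in) auto
  then obtain x where "x \<in> A" "Max (g ` \<kappa> ` A) = g (\<kappa> x)" by auto
  ultimately show thesis using that[of x] unfolding g_def by linarith
qed

lemma card_count_list_classes:
  "card ((\<lambda>x. (count_list (fst x), snd x)) ` ({xs :: 'x::finite list. length xs = n} \<times> {0::nat, 1}))
    \<le> (n + 1) ^ card (UNIV :: 'x set) * 2"
proof -
  let ?P = "Pi\<^sub>E (UNIV :: 'x set) (\<lambda>_. {..n}) \<times> {0::nat, 1}"
  have "(\<lambda>x. (count_list (fst x), snd x)) ` ({xs :: 'x list. length xs = n} \<times> {0::nat, 1}) \<subseteq> ?P"
    using count_le_length by (auto simp: PiE_UNIV_domain)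
  hence "card ((\<lambda>x. (count_list (fst x), snd x)) ` ({xs :: 'x list. length xs = n} \<times> {0::nat, 1})) \<le> card ?P"
    by (rule card_mono[rotated]) (simp add: finite_PiE)
  also have "card ?P = (n + 1) ^ card (UNIV :: 'x set) * 2" by (simp add: card_cartesian_product card_PiE)
  finally show ?thesis .
qed

lemma W_type_tensor_cong:
  assumes "\<And>x. real n * T x = real n * T' x"
  shows "W_type_tensor n W T = W_type_tensor n W T'"
  using assms by (simp only: W_type_tensor_def)

text \<open>For \<open>n = 0\<close> every distribution is a type, so a witness type must be chosen separately.\<close>
lemma W_type_tensor_of_list:
  fixes xs :: "'x::finite list"
  assumes xs: "length xs = n"
  obtains T ys where "T \<in> types_n n" "length ys = n" "mset ys = mset xs"
    "W_type_tensor n W T = kron_list (map W ys)"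
proof -
  define T where "T = (if n = 0 then (\<lambda>x::'x. 1 / real (card (UNIV :: 'x set))) else (\<lambda>x. real (count_list xs x) / real n))"
  have count: "real (count_list xs x) = real n * T x" for x
    using xs unfolding T_def by auto
  have "(\<Sum>x\<in>UNIV. T x) = 1"
  proof (cases "n = 0")
    case False
    have "(\<Sum>x\<in>UNIV. real (count_list xs x)) = real n"
      using sum_count_set[of xs UNIV] xs by (simp flip: of_nat_sum)
    thus ?thesis using False unfolding T_def by (simp add: sum_divide_distrib[symmetric])
  qed (simp add: T_def)
  moreover have "0 \<le> T x" for x unfolding T_def by simp
  moreover have "\<exists>k::nat. real n * T x = real k" for x using count by metis
  ultimately have T: "T \<in> types_n n" unfolding types_n_def prob_dists_def by blast
  define ys where "ys = (SOME ys. length ys = n \<and> (\<forall>x. real (count_list ys x) = real n * T x))"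
  have ys: "length ys = n \<and> (\<forall>x. real (count_list ys x) = real n * T x)"
    unfolding ys_def by (rule someI[of _ xs]) (use xs count in simp)
  hence "real (count_list ys x) = real (count_list xs x)" for x using count by simp
  hence "mset ys = mset xs" unfolding mset_eq_iff_count_list by (simp add: fun_eq_iff)
  moreover have "W_type_tensor n W T = kron_list (map W ys)" unfolding W_type_tensor_def ys_def ..
  ultimately show thesis using that T ys by blast
qed

lemma finite_scaled_types: "finite ((\<lambda>T x. real n * T x) ` (types_n n :: ('x::finite \<Rightarrow> real) set))"
proof (rule finite_subset)
  show "(\<lambda>T x. real n * T x) ` types_n n \<subseteq> Pi\<^sub>E (UNIV :: 'x set) (\<lambda>_. real ` {..n})"
  proof
    fix h assume "h \<in> (\<lambda>T x. real n * T x) ` types_n n"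
    then obtain T where T: "T \<in> types_n n" and h: "h = (\<lambda>x. real n * T x)" by blast
    have "h x \<in> real ` {..n}" for x
    proof -
      obtain k :: nat where k: "real n * T x = real k" using T unfolding types_n_def by blast
      have "T x \<le> (\<Sum>y\<in>UNIV. T y)"
        by (rule member_le_sum) (use T in \<open>auto simp: types_n_def prob_dists_def\<close>)
      hence "T x \<le> 1" using T unfolding types_n_def prob_dists_def by simp
      hence "real k \<le> real n" using k mult_left_le[of "T x" "real n"] by simp
      thus ?thesis unfolding h using k by auto
    qed
    thus "h \<in> Pi\<^sub>E UNIV (\<lambda>_. real ` {..n})" by (simp add: PiE_UNIV_domain)
  qed
qed (simp add: finite_PiE)

lemma cINF_types_le:
  fixes f :: "('x::finite \<Rightarrow> real) \<Rightarrow> real"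
  assumes f: "\<And>T T'. (\<And>x. real n * T x = real n * T' x) \<Longrightarrow> f T = f T'" and T: "T \<in> types_n n"
  shows "(INF T \<in> types_n n. f T) \<le> f T"
proof (rule cINF_lower[OF bdd_below_finite T])
  let ?s = "\<lambda>T x. real n * T x"
  have "f T' = f (inv_into (types_n n) ?s (?s T'))" if "T' \<in> types_n n" for T'
    by (rule f) (metis f_inv_into_f imageI that)
  hence "f ` types_n n \<subseteq> (\<lambda>h. f (inv_into (types_n n) ?s h)) ` (?s ` types_n n)" by auto
  thus "finite (f ` types_n n)" by (rule finite_surj[OF finite_scaled_types])
qed

lemma ns_success_le_type_bound:
  fixes W :: "'x::finite \<Rightarrow> complex mat" and n :: nat
  defines "A \<equiv> {xs. length xs = n} \<times> {0::nat, 1}"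
  assumes chan: "is_cq_channel d W" and M: "0 < M"
    and code: "ns_feasible (d ^ n * 2) A M \<Lambda> p"
    and \<gamma>: "\<gamma> \<le> 1 / (2 * (real n + 1) ^ card (UNIV :: 'x set))"
  obtains T where "T \<in> types_n n"
    "ns_success M A (tensor_channel_I2 W) \<Lambda> \<le> 1 - (SUP (\<sigma>, s) \<in> density_ops d \<times> {0..}.
       \<gamma> * Re (mtrace (mat_wedge (d ^ n) (W_type_tensor n W T)
         (complex_of_real (M * s) \<cdot>\<^sub>m kron_list (replicate n \<sigma>)))) - s)"
proof -
  define \<kappa> where "\<kappa> x = (count_list (fst x), snd x)" for x :: "'x list \<times> nat"
  have "card (\<kappa> ` A) \<le> (n + 1) ^ card (UNIV :: 'x set) * 2"
    unfolding A_def \<kappa>_def by (rule card_count_list_classes)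
  hence "real (card (\<kappa> ` A)) \<le> real ((n + 1) ^ card (UNIV :: 'x set) * 2)" by (rule of_nat_mono)
  hence card: "real (card (\<kappa> ` A)) \<le> 2 * (real n + 1) ^ card (UNIV :: 'x set)"
    by (simp add: add.commute mult.commute)
  have sum_p: "(\<Sum>x\<in>A. p x) = M" using code unfolding ns_feasible_def by blast
  have "finite A" "A \<noteq> {}" unfolding A_def by (rule finite_message_set, rule message_set_nonempty)
  then obtain x0 where "x0 \<in> A"
    and heavy: "M / (2 * (real n + 1) ^ card (UNIV :: 'x set)) \<le> (\<Sum>y\<in>{y \<in> A. \<kappa> y = \<kappa> x0}. p y)"
    using exists_class_mass_ge_average[OF _ _ card sum_p less_imp_le[OF M]] by blast
  then obtain xs0 i0 where x0: "x0 = (xs0, i0)" and xs0: "length xs0 = n" and i0: "i0 < 2"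
    unfolding A_def by auto
  obtain T ys where T: "T \<in> types_n n" and ys: "length ys = n" "mset ys = mset xs0"
    and WT: "W_type_tensor n W T = kron_list (map W ys)"
    using W_type_tensor_of_list[OF xs0] .
  have "\<kappa> x0 = (count_list ys, i0)" using ys(2) unfolding \<kappa>_def x0 mset_eq_iff_count_list by simp
  moreover have "M * \<gamma> \<le> M / (2 * (real n + 1) ^ card (UNIV :: 'x set))"
    using mult_left_mono[OF \<gamma>, of M] M by simp
  ultimately have mass: "M * \<gamma> \<le> (\<Sum>x\<in>{x \<in> A. (count_list (fst x), snd x) = (count_list ys, i0)}. p x)"
    using heavy unfolding \<kappa>_def by simp
  have "W undefined \<in> density_ops d" using chan unfolding is_cq_channel_def by blast
  hence ne: "density_ops d \<times> {0 :: real..} \<noteq> {}" by auto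
  have "(SUP (\<sigma>, s) \<in> density_ops d \<times> {0..}. \<gamma> * Re (mtrace (mat_wedge (d ^ n) (W_type_tensor n W T)
      (complex_of_real (M * s) \<cdot>\<^sub>m kron_list (replicate n \<sigma>)))) - s) \<le> 1 - ns_success M A (tensor_channel_I2 W) \<Lambda>"
  proof (rule cSUP_least[OF ne])
    fix z :: "complex mat \<times> real" assume "z \<in> density_ops d \<times> {0..}"
    then obtain \<sigma> s where z: "z = (\<sigma>, s)" and \<sigma>: "\<sigma> \<in> density_ops d" and s: "0 \<le> s" by auto
    show "(case z of (\<sigma>, s) \<Rightarrow> \<gamma> * Re (mtrace (mat_wedge (d ^ n) (W_type_tensor n W T)
        (complex_of_real (M * s) \<cdot>\<^sub>m kron_list (replicate n \<sigma>)))) - s) \<le> 1 - ns_success M A (tensor_channel_I2 W) \<Lambda>"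
      using ns_success_le_class_bound[OF chan M code[unfolded A_def] ys(1) i0 mass[unfolded A_def] \<sigma> s]
      unfolding z prod.case WT A_def by linarith
  qed
  thus thesis by (intro that[OF T]) linarith
qed

theorem lemma1:
  fixes W :: "'x::finite \<Rightarrow> complex mat" and d n M :: nat and r :: real
  assumes "is_cq_channel d W"
    and "M \<ge> 1"
    and "cq_capacity d 0 W < ereal r" and "ereal r < cq_capacity d 1 W"
  shows "eps_NS (real M) ({xs. length xs = n} \<times> {0, 1}) (tensor_channel_I2 W) (d ^ n * 2)
     \<ge> (INF T \<in> types_n n. SUP (\<sigma>, s) \<in> density_ops d \<times> {0..}.
           (1/2) * (real n + 1) powr (- real (card (UNIV :: 'x set))) *
             Re (mtrace (mat_wedge (d ^ n) (W_type_tensor n W T)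
                  ((complex_of_real (real M * s)) \<cdot>\<^sub>m kron_list (replicate n \<sigma>)))) - s)"
proof (rule eps_NS_lower_bound[OF finite_message_set message_set_nonempty])
  let ?\<gamma> = "(1/2) * (real n + 1) powr (- real (card (UNIV :: 'x set)))"
  let ?f = "\<lambda>T. SUP (\<sigma>, s) \<in> density_ops d \<times> {0..}. ?\<gamma> * Re (mtrace (mat_wedge (d ^ n)
    (W_type_tensor n W T) ((complex_of_real (real M * s)) \<cdot>\<^sub>m kron_list (replicate n \<sigma>)))) - s"
  have \<gamma>: "?\<gamma> \<le> 1 / (2 * (real n + 1) ^ card (UNIV :: 'x set))"
    by (simp add: powr_minus powr_realpow inverse_eq_divide)
  have INF_le: "(INF T \<in> types_n n. ?f T) \<le> ?f T" if "T \<in> types_n n" for T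
  proof (rule cINF_types_le[OF _ that])
    fix T T' :: "'x \<Rightarrow> real" assume "\<And>x. real n * T x = real n * T' x"
    hence "W_type_tensor n W T = W_type_tensor n W T'" by (rule W_type_tensor_cong)
    thus "?f T = ?f T'" by simp
  qed
  show "1 \<le> real M" using assms(2) by simp
  fix \<Lambda> :: "'x list \<times> nat \<Rightarrow> complex mat" and p
  assume code: "ns_feasible (d ^ n * 2) ({xs. length xs = n} \<times> {0, 1}) (real M) \<Lambda> p"
  have M: "0 < real M" using assms(2) by simp
  obtain T where T: "T \<in> types_n n"
    and "ns_success (real M) ({xs. length xs = n} \<times> {0, 1}) (tensor_channel_I2 W) \<Lambda> \<le> 1 - ?f T"
    by (rule ns_success_le_type_bound[OF assms(1) M code \<gamma>])
  with INF_le[OF T] show "ns_success (real M) ({xs. length xs = n} \<times> {0, 1}) (tensor_channel_I2 W) \<Lambda>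
      \<le> 1 - (INF T \<in> types_n n. ?f T)"
    by linarith
qed

end
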